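(* The enveloping operad $\mathrm{Env}(\mathrm{Bulle})$ of the $2$-coloured operad $\mathrm{Bulle}$ is isomorphic to the operad $\mathrm{CNCB}$ of bicoloured noncrossing configurations. That is, $\mathrm{Bulle}$ is a $2$-bubble decomposition of $\mathrm{CNCB}$.
   Context: BNCs: for $n\ge2$, a bicoloured noncrossing configuration (BNC) of size $n$ is a regular polygon with vertices $1,\dots,n+1$ clockwise, together with disjoint sets of blue arcs and red arcs among the arcs $(i,j)$, $1\le i<j\le n+1$. The arcs $(i,i+1)$ are the edges ($i$th edge), $(1,n+1)$ is the base, and the other arcs are diagonals. The conditions are: coloured (blue or red) arcs are pairwise noncrossing ($(i,j),(k,l)$ cross iff $i<k<j<l$ or $k<i<l<j$), and red arcs are diagonals. There is one BNC of size $1$: a blue segment. The operad $\mathrm{CNCB}$ has BNCs as elements (arity = size) and unit the size-$1$ BNC. Its composition $\mathfrak C\circ_i\mathfrak D$ ($\mathfrak C$ of size $n$, $\mathfrak D$ of size $m$) glues the base of $\mathfrak D$ onto the $i$th edge of $\mathfrak C$. Arcs $(a,b)$ of $\mathfrak C$ go to $(\sigma(a),\sigma(b))$ with $\sigma(v)=v$ for $v\le i$ and $v+m-1$ otherwise, and arcs $(a,b)$ of $\mathfrak D$ go to $(a+i-1,b+i-1)$, all keeping their colours. The exception is the arc $(i,i+m)$, which is red if the $i$th edge of $\mathfrak C$ and the base of $\mathfrak D$ are both uncoloured, blue if both are blue, and uncoloured otherwise. $\mathrm{Bulle}$: a bubble is a BNC of size $\ge2$ without coloured diagonals. Its output colour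 is $1$ if its base is blue and $2$ otherwise, and its $i$th input colour is $1$ if its $i$th edge is uncoloured and $2$ if blue. $\mathrm{Bulle}$ is the $2$-coloured operad of bubbles plus two units $\mathbf 1_1,\mathbf 1_2$, with composition that of $\mathrm{CNCB}$, defined exactly when the output colour of the second argument equals the $i$th input colour of the first. Equivalently, a bubble is encoded by $(c;d_1\cdots d_n)$ (output colour, word of input colours), and composition is substitution of the word of the second bubble at position $i$. Enveloping operad: for a coloured operad $\mathcal C$ whose arity-$1$ elements are exactly its units, with $\mathcal C^+$ its elements of arity $\ge2$, $\mathrm{Env}(\mathcal C)$ is the quotient of the free uncoloured operad on $\mathcal C^+$ (colours forgotten) by the smallest operadic congruence with $\mathfrak c(x)\circ_i\mathfrak c(y)\equiv\mathfrak c(x\circ_i y)$ whenever $x\circ_i y$ is defined in $\mathcal C$. Here $\mathfrak c(x)$ is the corolla labelled $x$. *)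

theory Defs
  imports Main
begin

text \<open>A BNC is represented as a triple (n, B, R): its size n, the set B of blue arcs and
the set R of red arcs.  An arc (i,j) is a pair of vertices with 1 <= i < j <= n+1.\<close>

type_synonym arc = "nat \<times> nat"
type_synonym bnc = "nat \<times> arc set \<times> arc set"

definition arcs :: "nat \<Rightarrow> arc set" where
  "arcs n = {(i,j). 1 \<le> i \<and> i < j \<and> j \<le> n + 1}"

definition is_diagonal :: "nat \<Rightarrow> arc \<Rightarrow> bool" where
  "is_diagonal n a = (a \<in> arcs n \<and> snd a \<noteq> fst a + 1 \<and> a \<noteq> (1, n + 1))"

definition crossing :: "arc \<Rightarrow> arc \<Rightarrow> bool" where
  "crossing a b = (let (i,j) = a; (k,l) = b in (i < k \<and> k < j \<and> j < l) \<or> (k < i \<and> i < l \<and> l < j))"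

definition bsize :: "bnc \<Rightarrow> nat" where "bsize c = fst c"
definition blue :: "bnc \<Rightarrow> arc set" where "blue c = fst (snd c)"
definition red :: "bnc \<Rightarrow> arc set" where "red c = snd (snd c)"

text \<open>The unique BNC of size 1: a blue segment.\<close>
definition bnc_unit :: bnc where "bnc_unit = (1, {(1,2)}, {})"

definition is_bnc :: "bnc \<Rightarrow> bool" where
  "is_bnc c = (c = bnc_unit \<or>
     (let n = bsize c; B = blue c; R = red c in
        n \<ge> 2 \<and> B \<union> R \<subseteq> arcs n \<and> B \<inter> R = {} \<and>
        (\<forall>a\<in>B \<union> R. \<forall>b\<in>B \<union> R. \<not> crossing a b) \<and>
        (\<forall>a\<in>R. is_diagonal n a)))"

text \<open>Composition of CNCB: glue the base of D onto the i-th edge of C (1 <= i <= size C).\<close>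
definition cncb_comp :: "bnc \<Rightarrow> nat \<Rightarrow> bnc \<Rightarrow> bnc" where
  "cncb_comp C i D =
     (let n = bsize C; m = bsize D;
          \<sigma> = (\<lambda>v. if v \<le> i then v else v + m - 1);
          mapC = (\<lambda>S. (\<lambda>(a,b). (\<sigma> a, \<sigma> b)) ` S);
          mapD = (\<lambda>S. (\<lambda>(a,b). (a + i - 1, b + i - 1)) ` S);
          e = (i, i + m);
          edge_unc = ((i, i+1) \<notin> blue C \<union> red C);
          edge_blue = ((i, i+1) \<in> blue C);
          base_unc = ((1, m+1) \<notin> blue D \<union> red D);
          base_blue = ((1, m+1) \<in> blue D);
          B' = ((mapC (blue C) \<union> mapD (blue D)) - {e}) \<union> (if edge_blue \<and> base_blue then {e} else {});
          R' = ((mapC (red C) \<union> mapD (red D)) - {e}) \<union> (if edge_unc \<and> base_unc then {e} else {})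
      in (n + m - 1, B', R'))"

definition is_bubble :: "bnc \<Rightarrow> bool" where
  "is_bubble c = (is_bnc c \<and> bsize c \<ge> 2 \<and> (\<forall>a \<in> blue c \<union> red c. \<not> is_diagonal (bsize c) a))"

definition out_colour :: "bnc \<Rightarrow> nat" where
  "out_colour c = (if (1, bsize c + 1) \<in> blue c then 1 else 2)"

definition in_colour :: "bnc \<Rightarrow> nat \<Rightarrow> nat" where
  "in_colour c i = (if (i, i + 1) \<in> blue c then 2 else 1)"

definition bulle_defined :: "bnc \<Rightarrow> nat \<Rightarrow> bnc \<Rightarrow> bool" where
  "bulle_defined x i y = (is_bubble x \<and> is_bubble y \<and> 1 \<le> i \<and> i \<le> bsize x \<and>
                          out_colour y = in_colour x i)"

datatype 'g tree = Leaf | Node 'g "'g tree list"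

fun nleaves :: "'g tree \<Rightarrow> nat" and nleaves_list :: "'g tree list \<Rightarrow> nat" where
  "nleaves Leaf = 1"
| "nleaves (Node g ts) = nleaves_list ts"
| "nleaves_list [] = 0"
| "nleaves_list (t # ts) = nleaves t + nleaves_list ts"

fun wf_tree :: "'g set \<Rightarrow> ('g \<Rightarrow> nat) \<Rightarrow> 'g tree \<Rightarrow> bool"
  and wf_list :: "'g set \<Rightarrow> ('g \<Rightarrow> nat) \<Rightarrow> 'g tree list \<Rightarrow> bool" where
  "wf_tree G ar Leaf = True"
| "wf_tree G ar (Node g ts) = (g \<in> G \<and> length ts = ar g \<and> wf_list G ar ts)"
| "wf_list G ar [] = True"
| "wf_list G ar (t # ts) = (wf_tree G ar t \<and> wf_list G ar ts)"

text \<open>Partial composition in the free operad: graft s onto the i-th leaf (1-based) of t.\<close>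
fun graft :: "'g tree \<Rightarrow> nat \<Rightarrow> 'g tree \<Rightarrow> 'g tree"
  and graft_list :: "'g tree list \<Rightarrow> nat \<Rightarrow> 'g tree \<Rightarrow> 'g tree list" where
  "graft Leaf i s = (if i = 1 then s else Leaf)"
| "graft (Node g ts) i s = Node g (graft_list ts i s)"
| "graft_list [] i s = []"
| "graft_list (t # ts) i s =
     (if i \<le> nleaves t then graft t i s # ts else t # graft_list ts (i - nleaves t) s)"

definition corolla :: "('g \<Rightarrow> nat) \<Rightarrow> 'g \<Rightarrow> 'g tree" where
  "corolla ar g = Node g (replicate (ar g) Leaf)"

text \<open>Generators: Bulle^+ = bubbles (colours forgotten), arity = size.\<close>
abbreviation wf_env :: "bnc tree \<Rightarrow> bool" where
  "wf_env \<equiv> wf_tree {c. is_bubble c} bsize"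

inductive env_eq :: "bnc tree \<Rightarrow> bnc tree \<Rightarrow> bool" where
  gen: "bulle_defined x i y \<Longrightarrow>
        env_eq (graft (corolla bsize x) i (corolla bsize y)) (corolla bsize (cncb_comp x i y))"
| refl: "wf_env t \<Longrightarrow> env_eq t t"
| sym: "env_eq t s \<Longrightarrow> env_eq s t"
| trans: "env_eq t s \<Longrightarrow> env_eq s u \<Longrightarrow> env_eq t u"
| comp: "env_eq t t' \<Longrightarrow> env_eq s s' \<Longrightarrow> 1 \<le> i \<Longrightarrow> i \<le> nleaves t \<Longrightarrow>
         env_eq (graft t i s) (graft t' i s')"

end

theory Submission
  imports Defs
begin

text \<open>
  A tree over bubbles is sent to the configuration obtained by composing its bubbles in CNCB.
  This configuration is computed directly: every subtree spans an arc of the polygon, and that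
  arc gets the colour that the CNCB composition gives to the arc along which the subtree is
  glued. Grafting of trees then becomes composition in CNCB, so the map respects the relations
  defining Env(Bulle). It is onto: a configuration without coloured diagonals is a bubble, and
  one with a coloured diagonal is the composite of the two smaller configurations on either side
  of it. Finally, every tree is equivalent to a reduced one, in which no child can be merged into
  its parent by a composition of Bulle; in a reduced tree every non-root subtree spans a coloured
  arc, and the tree can be read back from its configuration.
\<close>

abbreviation wf_env_list :: "bnc tree list \<Rightarrow> bool" where
  "wf_env_list \<equiv> wf_list {c. is_bubble c} bsize"

lemma wf_env_list_iff: "wf_env_list ts \<longleftrightarrow> (\<forall>t\<in>set ts. wf_env t)"
  by (induction ts) auto

lemma nleaves_list_append [simp]: "nleaves_list (xs @ ys) = nleaves_list xs + nleaves_list ys"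
  by (induction xs) auto

lemma nleaves_list_replicate_Leaf [simp]: "nleaves_list (replicate k Leaf) = k"
  by (induction k) auto

lemma nleaves_ge_1: "wf_env t \<Longrightarrow> 1 \<le> nleaves t"
  and nleaves_list_ge_length: "wf_env_list ts \<Longrightarrow> length ts \<le> nleaves_list ts"
  by (induction t and ts rule: nleaves_nleaves_list.induct) (auto simp: is_bubble_def)

lemma nleaves_Node_ge_2: "wf_env (Node g ts) \<Longrightarrow> 2 \<le> nleaves (Node g ts)"
  using nleaves_list_ge_length[of ts] by (auto simp: is_bubble_def)

lemma nleaves_graft:
  "1 \<le> i \<Longrightarrow> i \<le> nleaves t \<Longrightarrow> nleaves (graft t i s) = nleaves t + nleaves s - 1"
  and nleaves_list_graft_list:
  "1 \<le> i \<Longrightarrow> i \<le> nleaves_list ts \<Longrightarrow>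
     nleaves_list (graft_list ts i s) = nleaves_list ts + nleaves s - 1"
  by (induction t i s and ts i s rule: graft_graft_list.induct) auto

lemma length_graft_list [simp]: "length (graft_list ts i s) = length ts"
  by (induction ts arbitrary: i) auto

lemma wf_env_graft: "wf_env t \<Longrightarrow> wf_env s \<Longrightarrow> wf_env (graft t i s)"
  and wf_env_list_graft_list: "wf_env_list ts \<Longrightarrow> wf_env s \<Longrightarrow> wf_env_list (graft_list ts i s)"
  by (induction t i s and ts i s rule: graft_graft_list.induct) auto

lemma graft_list_append:
  "nleaves_list A < i \<Longrightarrow> i \<le> nleaves_list A + nleaves t \<Longrightarrow>
     graft_list (A @ t # C) i s = A @ graft t (i - nleaves_list A) s # C"
  by (induction A arbitrary: i) (auto simp: diff_diff_add)

lemma graft_list_append_Leaf: "graft_list (A @ Leaf # C) (Suc (nleaves_list A)) s = A @ s # C"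
  using graft_list_append[of A "Suc (nleaves_list A)" Leaf] by simp

lemma wf_env_corolla: "is_bubble x \<Longrightarrow> wf_env (corolla bsize x)"
  by (simp add: corolla_def wf_env_list_iff)

lemma nleaves_corolla [simp]: "nleaves (corolla bsize x) = bsize x"
  by (simp add: corolla_def)

definition noncrossing :: "arc set \<Rightarrow> bool" where
  "noncrossing S \<longleftrightarrow> (\<forall>u\<in>S. \<forall>v\<in>S. \<not> crossing u v)"

lemma nested_not_crossing: "fst y \<le> fst x \<Longrightarrow> snd x \<le> snd y \<Longrightarrow> \<not> crossing x y \<and> \<not> crossing y x"
  by (cases x; cases y) (auto simp: crossing_def)

lemma separated_not_crossing: "snd x \<le> fst y \<Longrightarrow> \<not> crossing x y \<and> \<not> crossing y x"
  by (cases x; cases y) (auto simp: crossing_def)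

lemma crossing_strict_mono_on:
  "strict_mono_on V f \<Longrightarrow> x1 \<in> V \<Longrightarrow> y1 \<in> V \<Longrightarrow> x2 \<in> V \<Longrightarrow> y2 \<in> V \<Longrightarrow>
     crossing (f x1, f y1) (f x2, f y2) \<longleftrightarrow> crossing (x1, y1) (x2, y2)"
  by (simp add: crossing_def strict_mono_on_less)

definition map_arcs :: "(nat \<Rightarrow> nat) \<Rightarrow> arc set \<Rightarrow> arc set" where
  "map_arcs f X = (\<lambda>(x, y). (f x, f y)) ` X"

lemma map_arcs_simps [simp]:
  "map_arcs f {} = {}"
  "map_arcs f (insert (x, y) X) = insert (f x, f y) (map_arcs f X)"
  "map_arcs f (X \<union> Y) = map_arcs f X \<union> map_arcs f Y"
  by (auto simp: map_arcs_def)

lemma map_arcs_mono: "X \<subseteq> Y \<Longrightarrow> map_arcs f X \<subseteq> map_arcs f Y"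
  by (auto simp: map_arcs_def)

lemma map_arcs_map_arcs: "map_arcs g (map_arcs f X) = map_arcs (g \<circ> f) X"
  by (auto simp: map_arcs_def image_image case_prod_beta)

lemma map_arcs_cong_id: "(\<And>x y. (x, y) \<in> X \<Longrightarrow> f x = x \<and> f y = y) \<Longrightarrow> map_arcs f X = X"
  by (force simp: map_arcs_def)

lemma map_arcs_cong:
  "(\<And>x y. (x, y) \<in> X \<Longrightarrow> f x = g x \<and> f y = g y) \<Longrightarrow> map_arcs f X = map_arcs g X"
  by (force simp: map_arcs_def)

lemma map_arcs_Diff_inj:
  "inj f \<Longrightarrow> map_arcs f (X - {(x, y)}) = map_arcs f X - {(f x, f y)}"
  by (auto simp: map_arcs_def inj_eq)

text \<open>The relabelling of the vertices of C in cncb_comp C q D, with m the size of D.\<close>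

definition stretch :: "nat \<Rightarrow> nat \<Rightarrow> nat \<Rightarrow> nat" where
  "stretch q m v = (if v \<le> q then v else v + m - 1)"

lemma strict_mono_stretch: "1 \<le> m \<Longrightarrow> strict_mono (stretch q m)"
  by (auto simp: strict_mono_def stretch_def)

lemma map_arcs_stretch_left: "(\<And>x y. (x, y) \<in> X \<Longrightarrow> x \<le> q \<and> y \<le> q) \<Longrightarrow> map_arcs (stretch q m) X = X"
  by (rule map_arcs_cong_id) (auto simp: stretch_def)

lemma map_arcs_stretch_right:
  "1 \<le> m \<Longrightarrow> (\<And>x y. (x, y) \<in> X \<Longrightarrow> q < x \<and> q < y) \<Longrightarrow>
     map_arcs (stretch q m) X = map_arcs (\<lambda>v. v + (m - 1)) X"
  by (rule map_arcs_cong) (fastforce simp: stretch_def)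

definition sides :: "nat \<Rightarrow> arc set" where
  "sides n = {u \<in> arcs n. \<not> is_diagonal n u}"

lemma mem_sides:
  "1 \<le> n \<Longrightarrow> (a, b) \<in> sides n \<longleftrightarrow> 1 \<le> a \<and> a \<le> n \<and> b = a + 1 \<or> a = 1 \<and> b = n + 1"
  by (auto simp: sides_def arcs_def is_diagonal_def)

lemma side_not_crossing: "u \<in> sides n \<Longrightarrow> v \<in> arcs n \<Longrightarrow> \<not> crossing u v \<and> \<not> crossing v u"
  by (cases u; cases v) (auto simp: sides_def arcs_def is_diagonal_def crossing_def)

lemma map_arcs_stretch_sides:
  assumes "1 \<le> i" "i \<le> n" "1 \<le> m"
  shows "map_arcs (stretch i m) (sides n) \<subseteq> insert (i, i + m) (sides (n + m - 1))"
proof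
  fix u
  assume "u \<in> map_arcs (stretch i m) (sides n)"
  then obtain a b where u: "u = (stretch i m a, stretch i m b)" and "(a, b) \<in> sides n"
    by (auto simp: map_arcs_def)
  then have "1 \<le> a \<and> a \<le> n \<and> b = a + 1 \<or> a = 1 \<and> b = n + 1"
    using mem_sides[of n a b] assms by auto
  moreover have "1 \<le> n + m - 1" using assms by simp
  ultimately show "u \<in> insert (i, i + m) (sides (n + m - 1))"
    using assms by (auto simp: u stretch_def mem_sides)
qed

lemma map_arcs_shift_sides:
  assumes "1 \<le> i" "i \<le> n" "1 \<le> m"
  shows "map_arcs (\<lambda>v. v + i - 1) (sides m) \<subseteq> insert (i, i + m) (sides (n + m - 1))"
proof
  fix u
  assume "u \<in> map_arcs (\<lambda>v. v + i - 1) (sides m)"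
  then obtain a b where u: "u = (a + i - 1, b + i - 1)" and "(a, b) \<in> sides m"
    by (auto simp: map_arcs_def)
  then have "1 \<le> a \<and> a \<le> m \<and> b = a + 1 \<or> a = 1 \<and> b = m + 1"
    using mem_sides[of m a b] assms by auto
  moreover have "1 \<le> n + m - 1" using assms by simp
  ultimately show "u \<in> insert (i, i + m) (sides (n + m - 1))"
    using assms by (auto simp: u mem_sides)
qed

lemma bnc_simps [simp]: "bsize (n, B, R) = n" "blue (n, B, R) = B" "red (n, B, R) = R"
  by (simp_all add: bsize_def blue_def red_def)

lemma is_bnc_iff:
  "is_bnc c \<longleftrightarrow> c = bnc_unit \<or>
     2 \<le> bsize c \<and> blue c \<union> red c \<subseteq> arcs (bsize c) \<and> blue c \<inter> red c = {} \<and>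
     noncrossing (blue c \<union> red c) \<and> (\<forall>u\<in>red c. is_diagonal (bsize c) u)"
  by (simp add: is_bnc_def noncrossing_def Let_def)

lemma bnc_arcs_subset: "is_bnc c \<Longrightarrow> blue c \<union> red c \<subseteq> arcs (bsize c)"
  by (auto simp: is_bnc_iff bnc_unit_def arcs_def)

lemma bnc_disjoint_noncrossing:
  "is_bnc c \<Longrightarrow> blue c \<inter> red c = {} \<and> noncrossing (blue c \<union> red c)"
  by (auto simp: is_bnc_iff bnc_unit_def noncrossing_def crossing_def)

lemma red_is_diagonal: "is_bnc c \<Longrightarrow> u \<in> red c \<Longrightarrow> is_diagonal (bsize c) u"
  by (auto simp: is_bnc_iff bnc_unit_def)

datatype colour = Blue | Red

fun coloured :: "colour \<Rightarrow> bnc \<Rightarrow> arc set" where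
  "coloured Blue c = blue c"
| "coloured Red c = red c"

lemma coloured_subset: "coloured col c \<subseteq> blue c \<union> red c"
  by (cases col) auto

lemma bnc_eqI: "bsize c = bsize c' \<Longrightarrow> (\<And>col. coloured col c = coloured col c') \<Longrightarrow> c = c'"
  using coloured.simps by (metis blue_def bsize_def red_def prod_eq_iff)

text \<open>The colour that cncb_comp gives to the arc along which a base is glued onto an edge,
  in terms of whether the edge and the base are blue (edges and bases are never red).\<close>

definition glue_colour :: "bool \<Rightarrow> bool \<Rightarrow> colour option" where
  "glue_colour e b = (if e \<and> b then Some Blue else if \<not> e \<and> \<not> b then Some Red else None)"

lemma bsize_cncb_comp [simp]: "bsize (cncb_comp C i D) = bsize C + bsize D - 1"
  by (simp add: cncb_comp_def Let_def)

lemma coloured_cncb_comp: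
  assumes "(i, i + 1) \<notin> red C" "(1, bsize D + 1) \<notin> red D"
  shows "coloured col (cncb_comp C i D) =
    (map_arcs (stretch i (bsize D)) (coloured col C) \<union>
       map_arcs (\<lambda>v. v + i - 1) (coloured col D) - {(i, i + bsize D)}) \<union>
    (if glue_colour ((i, i + 1) \<in> blue C) ((1, bsize D + 1) \<in> blue D) = Some col
     then {(i, i + bsize D)} else {})"
  using assms
  by (cases col) (simp_all add: cncb_comp_def Let_def map_arcs_def stretch_def glue_colour_def)

lemma is_bnc_map_arcs:
  assumes c: "is_bnc c" and B: "B \<subseteq> blue c" and R: "R \<subseteq> red c"
    and mono: "strict_mono_on V f" and V: "\<And>x y. (x, y) \<in> B \<union> R \<Longrightarrow> x \<in> V \<and> y \<in> V"
    and m: "2 \<le> m" and range: "map_arcs f (B \<union> R) \<subseteq> arcs m"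
    and diagonal: "\<And>u. u \<in> map_arcs f R \<Longrightarrow> is_diagonal m u"
  shows "is_bnc (m, map_arcs f B, map_arcs f R)"
proof -
  have disjoint: "blue c \<inter> red c = {}" and nc: "noncrossing (blue c \<union> red c)"
    using bnc_disjoint_noncrossing[OF c] by auto
  have "map_arcs f B \<inter> map_arcs f R = {}"
  proof (rule ccontr)
    assume "map_arcs f B \<inter> map_arcs f R \<noteq> {}"
    then obtain x y x' y' where "(x, y) \<in> B" "(x', y') \<in> R" "f x = f x'" "f y = f y'"
      by (auto simp: map_arcs_def)
    with V mono have "(x, y) \<in> B \<inter> R" by (metis Un_iff IntI strict_mono_on_eqD)
    then show False using B R disjoint by blast
  qed
  moreover have "noncrossing (map_arcs f B \<union> map_arcs f R)"
    unfolding noncrossing_def map_arcs_simps(3)[symmetric]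
  proof (intro ballI)
    fix u v
    assume "u \<in> map_arcs f (B \<union> R)" "v \<in> map_arcs f (B \<union> R)"
    then obtain x1 y1 x2 y2 where "(x1, y1) \<in> B \<union> R" "(x2, y2) \<in> B \<union> R"
      and "u = (f x1, f y1)" "v = (f x2, f y2)"
      by (auto simp: map_arcs_def)
    with V mono nc B R show "\<not> crossing u v"
      by (simp add: crossing_strict_mono_on noncrossing_def) blast
  qed
  ultimately show ?thesis
    using m range diagonal by (simp add: is_bnc_iff)
qed

lemma is_bnc_insert_side:
  assumes c: "is_bnc (m, B, R)" and m: "2 \<le> m" and u: "u \<in> sides m"
  shows "is_bnc (m, insert u B, R)"
proof -
  have "B \<union> R \<subseteq> arcs m" "B \<inter> R = {}" "noncrossing (B \<union> R)" "\<forall>v\<in>R. is_diagonal m v"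
    using c m by (auto simp: is_bnc_iff bnc_unit_def)
  moreover have "u \<in> arcs m" "u \<notin> R" using u calculation(4) by (auto simp: sides_def)
  ultimately show ?thesis
    using m side_not_crossing[OF u] by (auto simp: is_bnc_iff noncrossing_def)
qed

definition edge_blue :: "bnc \<Rightarrow> nat \<Rightarrow> bool" where
  "edge_blue g j \<longleftrightarrow> (j, j + 1) \<in> blue g"

definition base_blue :: "bnc \<Rightarrow> bool" where
  "base_blue g \<longleftrightarrow> (1, bsize g + 1) \<in> blue g"

lemma is_bubble_iff: "is_bubble c \<longleftrightarrow> 2 \<le> bsize c \<and> red c = {} \<and> blue c \<subseteq> sides (bsize c)"
proof
  assume c: "is_bubble c"
  then have "c \<noteq> bnc_unit" by (auto simp: is_bubble_def bnc_unit_def)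
  with c show "2 \<le> bsize c \<and> red c = {} \<and> blue c \<subseteq> sides (bsize c)"
    by (auto simp: is_bubble_def is_bnc_iff sides_def)
next
  assume c: "2 \<le> bsize c \<and> red c = {} \<and> blue c \<subseteq> sides (bsize c)"
  then have "blue c \<subseteq> arcs (bsize c)" by (auto simp: sides_def)
  moreover have "noncrossing (blue c \<union> red c)"
    using c calculation side_not_crossing by (fastforce simp: noncrossing_def)
  ultimately show "is_bubble c"
    using c by (auto simp: is_bubble_def is_bnc_iff sides_def)
qed

lemma bubble_eqI:
  assumes "is_bubble h" "is_bubble h'" "bsize h = bsize h'" "base_blue h = base_blue h'"
    and "\<And>k. 1 \<le> k \<Longrightarrow> k \<le> bsize h \<Longrightarrow> edge_blue h k = edge_blue h' k"
  shows "h = h'"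
proof (rule bnc_eqI)
  show "bsize h = bsize h'" by fact
  have sides: "red h = {}" "red h' = {}" "blue h \<subseteq> sides (bsize h)" "blue h' \<subseteq> sides (bsize h)"
    "1 \<le> bsize h" using assms(1-3) by (auto simp: is_bubble_iff)
  have "blue h = blue h'"
  proof (intro set_eqI)
    fix u
    show "u \<in> blue h \<longleftrightarrow> u \<in> blue h'"
    proof (cases "\<exists>k. 1 \<le> k \<and> k \<le> bsize h \<and> u = (k, k + 1)")
      case True
      then show ?thesis using assms(5) by (auto simp: edge_blue_def)
    next
      case False
      then have "u \<in> blue h \<or> u \<in> blue h' \<Longrightarrow> u = (1, bsize h + 1)"
        using sides(3-5) mem_sides[of "bsize h"] by (cases u) blast
      then show ?thesis using assms(3,4) by (auto simp: base_blue_def)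
    qed
  qed
  then show "coloured col h = coloured col h'" for col using sides by (cases col) auto
qed

lemma bulle_defined_iff:
  "bulle_defined x i y \<longleftrightarrow>
     is_bubble x \<and> is_bubble y \<and> 1 \<le> i \<and> i \<le> bsize x \<and> (base_blue y \<longleftrightarrow> \<not> edge_blue x i)"
  by (auto simp: bulle_defined_def out_colour_def in_colour_def base_blue_def edge_blue_def)

lemma is_bubble_cncb_comp:
  assumes "bulle_defined x i y"
  shows "is_bubble (cncb_comp x i y)"
proof -
  let ?n = "bsize x" and ?m = "bsize y"
  have x: "2 \<le> ?n" "red x = {}" "blue x \<subseteq> sides ?n"
    and y: "2 \<le> ?m" "red y = {}" "blue y \<subseteq> sides ?m"
    and i: "1 \<le> i" "i \<le> ?n" and colours: "base_blue y \<longleftrightarrow> \<not> edge_blue x i"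
    using assms by (auto simp: bulle_defined_iff is_bubble_iff)
  have not_glued: "glue_colour ((i, i + 1) \<in> blue x) ((1, ?m + 1) \<in> blue y) = None"
    using colours by (simp add: glue_colour_def base_blue_def edge_blue_def)
  have comp: "coloured col (cncb_comp x i y) =
      map_arcs (stretch i ?m) (coloured col x) \<union> map_arcs (\<lambda>v. v + i - 1) (coloured col y) -
      {(i, i + ?m)}" for col
    using coloured_cncb_comp[of i x y col] x(2) y(2) not_glued by simp
  have "map_arcs (stretch i ?m) (blue x) \<union> map_arcs (\<lambda>v. v + i - 1) (blue y) \<subseteq>
      insert (i, i + ?m) (sides (?n + ?m - 1))"
    using map_arcs_mono[OF x(3), of "stretch i ?m"] map_arcs_mono[OF y(3), of "\<lambda>v. v + i - 1"]
      map_arcs_stretch_sides[OF i, of ?m] map_arcs_shift_sides[OF i, of ?m] y(1)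
    by (meson Un_least order_trans one_le_numeral)
  then have "blue (cncb_comp x i y) \<subseteq> sides (?n + ?m - 1)"
    using comp[of Blue] by auto
  moreover have "red (cncb_comp x i y) = {}"
    using comp[of Red] x(2) y(2) by simp
  ultimately show ?thesis using x(1) y(1) by (simp add: is_bubble_iff)
qed

section \<open>The configuration of a tree\<close>

fun root_blue :: "bnc tree \<Rightarrow> bool" where
  "root_blue Leaf = True"
| "root_blue (Node g ts) = base_blue g"

text \<open>A subtree whose leaves are the edges p, ..., p + nleaves t - 1 of the polygon spans the
  arc (p, p + nleaves t); the flag e tells whether the edge it is grafted onto is blue. The whole
  tree is treated as grafted onto the blue edge of the unit, which leaves its base colour as is.\<close>

definition top_arcs :: "colour \<Rightarrow> bool \<Rightarrow> nat \<Rightarrow> bnc tree \<Rightarrow> arc set" where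
  "top_arcs col e p t =
     (if glue_colour e (root_blue t) = Some col then {(p, p + nleaves t)} else {})"

fun sub_arcs :: "colour \<Rightarrow> nat \<Rightarrow> bnc tree \<Rightarrow> arc set"
  and sub_arcs_list :: "colour \<Rightarrow> bnc \<Rightarrow> nat \<Rightarrow> nat \<Rightarrow> bnc tree list \<Rightarrow> arc set" where
  "sub_arcs col p Leaf = {}"
| "sub_arcs col p (Node g ts) = sub_arcs_list col g 1 p ts"
| "sub_arcs_list col g j p [] = {}"
| "sub_arcs_list col g j p (t # ts) =
     top_arcs col (edge_blue g j) p t \<union> sub_arcs col p t \<union>
     sub_arcs_list col g (Suc j) (p + nleaves t) ts"

abbreviation tree_arcs :: "colour \<Rightarrow> bool \<Rightarrow> nat \<Rightarrow> bnc tree \<Rightarrow> arc set" where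
  "tree_arcs col e p t \<equiv> top_arcs col e p t \<union> sub_arcs col p t"

definition bnc_of :: "bnc tree \<Rightarrow> bnc" where
  "bnc_of t = (nleaves t, tree_arcs Blue True 1 t, tree_arcs Red True 1 t)"

lemma coloured_bnc_of: "coloured col (bnc_of t) = tree_arcs col True 1 t"
  by (cases col) (simp_all add: bnc_of_def)

lemma bsize_bnc_of [simp]: "bsize (bnc_of t) = nleaves t"
  by (simp add: bnc_of_def)

lemma bnc_of_Leaf: "bnc_of Leaf = bnc_unit"
  by (simp add: bnc_of_def top_arcs_def glue_colour_def bnc_unit_def)

lemma top_arcs_shift: "top_arcs col e (p + d) t = map_arcs (\<lambda>v. v + d) (top_arcs col e p t)"
  by (simp add: top_arcs_def algebra_simps)

lemma sub_arcs_shift: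
  "sub_arcs col (p + d) t = map_arcs (\<lambda>v. v + d) (sub_arcs col p t)"
  and sub_arcs_list_shift:
  "sub_arcs_list col g j (p + d) ts = map_arcs (\<lambda>v. v + d) (sub_arcs_list col g j p ts)"
proof (induction t and ts arbitrary: p and g j p rule: nleaves_nleaves_list.induct)
  case (4 t ts g j p)
  have "sub_arcs_list col g (Suc j) (p + d + nleaves t) ts =
      map_arcs (\<lambda>v. v + d) (sub_arcs_list col g (Suc j) (p + nleaves t) ts)"
    using "4.IH"(2)[of g "Suc j" "p + nleaves t"] by (simp add: ac_simps)
  then show ?case using "4.IH"(1) by (simp add: top_arcs_shift)
qed simp_all

lemma top_arcs_subset: "top_arcs col e p t \<subseteq> {(p, p + nleaves t)}"
  by (simp add: top_arcs_def)

lemma sub_arcs_range: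
  "wf_env t \<Longrightarrow> x \<in> sub_arcs col p t \<Longrightarrow>
     p \<le> fst x \<and> fst x < snd x \<and> snd x \<le> p + nleaves t \<and> snd x - fst x < nleaves t"
  and sub_arcs_list_range:
  "wf_env_list ts \<Longrightarrow> x \<in> sub_arcs_list col g j p ts \<Longrightarrow>
     p \<le> fst x \<and> fst x < snd x \<and> snd x \<le> p + nleaves_list ts \<and>
     (snd x - fst x < nleaves_list ts \<or> length ts \<le> 1)"
proof (induction t and ts arbitrary: p and g j p rule: nleaves_nleaves_list.induct)
  case (2 h ts p)
  have "wf_env_list ts" "2 \<le> length ts" using "2.prems"(1) by (auto simp: is_bubble_def)
  with "2.IH"[of h 1 p] "2.prems"(2) show ?case by auto
next
  case (4 t ts g j p)
  have wt: "wf_env t" and wts: "wf_env_list ts" using "4.prems"(1) by auto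
  have bounds: "1 \<le> nleaves t" "length ts \<le> nleaves_list ts"
    using nleaves_ge_1[OF wt] nleaves_list_ge_length[OF wts] .
  from "4.prems"(2) consider "x = (p, p + nleaves t)" | "x \<in> sub_arcs col p t"
    | "x \<in> sub_arcs_list col g (Suc j) (p + nleaves t) ts"
    by (auto simp: top_arcs_def split: if_splits)
  then show ?case
  proof cases
    case 1
    then show ?thesis using bounds by (cases ts) auto
  next
    case 2
    from "4.IH"(1)[OF wt 2] show ?thesis using bounds by (cases ts) auto
  next
    case 3
    from "4.IH"(2)[OF wts 3] show ?thesis using bounds by (cases ts) auto
  qed
qed auto

lemma tree_arcs_range:
  "wf_env t \<Longrightarrow> x \<in> tree_arcs col e p t \<Longrightarrow> p \<le> fst x \<and> fst x < snd x \<and> snd x \<le> p + nleaves t"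
  using sub_arcs_range[of t x col p] top_arcs_subset[of col e p t] nleaves_ge_1[of t] by auto

lemma span_notin_sub_arcs: "wf_env t \<Longrightarrow> (p, p + nleaves t) \<notin> sub_arcs col p t"
  using sub_arcs_range[of t "(p, p + nleaves t)" col p] by auto

lemma span_in_tree_arcs:
  "wf_env t \<Longrightarrow> (p, p + nleaves t) \<in> tree_arcs col e p t \<longleftrightarrow> glue_colour e (root_blue t) = Some col"
  using span_notin_sub_arcs[of t p col] by (simp add: top_arcs_def)

lemma tree_arcs_Red_length_ge_2:
  "wf_env t \<Longrightarrow> x \<in> tree_arcs Red e p t \<Longrightarrow> fst x + 2 \<le> snd x"
  and sub_arcs_list_Red_length_ge_2:
  "wf_env_list ts \<Longrightarrow> x \<in> sub_arcs_list Red g j p ts \<Longrightarrow> fst x + 2 \<le> snd x"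
proof (induction t and ts arbitrary: e p and g j p rule: nleaves_nleaves_list.induct)
  case (1 e p)
  then show ?case by (simp add: top_arcs_def glue_colour_def split: if_splits)
next
  case (2 h ts e p)
  show ?case
  proof (cases "x \<in> top_arcs Red e p (Node h ts)")
    case True
    then show ?thesis using nleaves_Node_ge_2[OF "2.prems"(1)]
      by (simp add: top_arcs_def split: if_splits)
  next
    case False
    with "2.prems" have "wf_env_list ts" "x \<in> sub_arcs_list Red h 1 p ts" by auto
    then show ?thesis by (rule "2.IH")
  qed
qed auto

lemma tree_arcs_disjoint:
  "wf_env t \<Longrightarrow> tree_arcs Blue e p t \<inter> tree_arcs Red e p t = {}"
  and sub_arcs_list_disjoint:
  "wf_env_list ts \<Longrightarrow> sub_arcs_list Blue g j p ts \<inter> sub_arcs_list Red g j p ts = {}"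
proof (induction t and ts arbitrary: e p and g j p rule: nleaves_nleaves_list.induct)
  case (2 h ts e p)
  have "top_arcs Blue e p (Node h ts) \<inter> top_arcs Red e p (Node h ts) = {}"
    by (simp add: top_arcs_def)
  moreover have "(p, p + nleaves (Node h ts)) \<notin> sub_arcs col p (Node h ts)" for col
    using span_notin_sub_arcs "2.prems" by blast
  moreover have "sub_arcs Blue p (Node h ts) \<inter> sub_arcs Red p (Node h ts) = {}"
    using 2 by simp
  ultimately show ?case
    using top_arcs_subset[of Blue e p "Node h ts"] top_arcs_subset[of Red e p "Node h ts"] by blast
next
  case (4 t ts g j p)
  have wt: "wf_env t" and wts: "wf_env_list ts" using "4.prems" by auto
  have sep: "x \<notin> sub_arcs_list c2 g (Suc j) (p + nleaves t) ts"
    if "x \<in> tree_arcs c1 (edge_blue g j) p t" for x c1 c2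
    using tree_arcs_range[OF wt that] sub_arcs_list_range[OF wts, of x c2 g "Suc j" "p + nleaves t"]
    by auto
  show ?case
    using sep "4.IH"(1)[OF wt, of "edge_blue g j" p] "4.IH"(2)[OF wts, of g "Suc j" "p + nleaves t"]
    by auto
qed (auto simp: top_arcs_def glue_colour_def)

lemma tree_arcs_not_crossing:
  "wf_env t \<Longrightarrow> x \<in> insert (p, p + nleaves t) (sub_arcs c1 p t) \<Longrightarrow>
     y \<in> insert (p, p + nleaves t) (sub_arcs c2 p t) \<Longrightarrow> \<not> crossing x y"
  and sub_arcs_list_not_crossing:
  "wf_env_list ts \<Longrightarrow> x \<in> sub_arcs_list c1 g j p ts \<Longrightarrow> y \<in> sub_arcs_list c2 g j p ts \<Longrightarrow>
     \<not> crossing x y"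
proof (induction t and ts arbitrary: p x y and g j p x y rule: nleaves_nleaves_list.induct)
  case (1 p)
  then show ?case by (simp add: crossing_def)
next
  case (2 h ts p)
  let ?s = "(p, p + nleaves (Node h ts))"
  have inside: "p \<le> fst z \<and> snd z \<le> p + nleaves (Node h ts)"
    if "z \<in> insert ?s (sub_arcs c p (Node h ts))" for z c
    using that sub_arcs_range[OF "2.prems"(1), of z c p] by auto
  show ?case
  proof (cases "x = ?s \<or> y = ?s")
    case True
    moreover have "p \<le> fst x" "snd x \<le> p + nleaves (Node h ts)"
      "p \<le> fst y" "snd y \<le> p + nleaves (Node h ts)"
      using inside "2.prems"(2,3) by blast+
    ultimately show ?thesis
      using nested_not_crossing[of x y] nested_not_crossing[of y x] by auto
  next
    case False
    with "2.prems" have "wf_env_list ts"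
      "x \<in> sub_arcs_list c1 h 1 p ts" "y \<in> sub_arcs_list c2 h 1 p ts"
      by auto
    then show ?thesis by (rule "2.IH")
  qed
next
  case (4 t ts g j p)
  have wt: "wf_env t" and wts: "wf_env_list ts" using "4.prems"(1) by auto
  let ?q = "p + nleaves t"
  let ?T = "\<lambda>c. insert (p, ?q) (sub_arcs c p t)"
  have T: "snd z \<le> ?q" if "z \<in> ?T c" for z c
    using that sub_arcs_range[OF wt, of z c p] by auto
  have R: "?q \<le> fst z" if "z \<in> sub_arcs_list c g (Suc j) ?q ts" for z c
    using sub_arcs_list_range[OF wts that] by simp
  have "x \<in> ?T c1 \<or> x \<in> sub_arcs_list c1 g (Suc j) ?q ts"
    "y \<in> ?T c2 \<or> y \<in> sub_arcs_list c2 g (Suc j) ?q ts"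
    using "4.prems"(2,3) top_arcs_subset[of _ _ p t] by auto
  then show ?case
    using "4.IH"(1)[OF wt] "4.IH"(2)[OF wts] T R
      separated_not_crossing[of x y] separated_not_crossing[of y x]
    by (meson order_trans)
qed simp

lemma bnc_of_is_bnc: "wf_env t \<Longrightarrow> is_bnc (bnc_of t)"
proof (cases t)
  case Leaf
  then show ?thesis by (simp add: bnc_of_Leaf is_bnc_def)
next
  case (Node h ts)
  assume wt: "wf_env t"
  let ?N = "nleaves t"
  have N: "2 \<le> ?N" using nleaves_Node_ge_2 wt Node by blast
  have in_span: "z \<in> insert (1, 1 + ?N) (sub_arcs col 1 t)"
    if "z \<in> tree_arcs col True 1 t" for z col
    using that top_arcs_subset[of col True 1 t] by auto
  have "blue (bnc_of t) \<union> red (bnc_of t) \<subseteq> arcs ?N"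
    using tree_arcs_range[OF wt] by (fastforce simp: bnc_of_def arcs_def)
  moreover have "blue (bnc_of t) \<inter> red (bnc_of t) = {}"
    using tree_arcs_disjoint[OF wt] by (simp add: bnc_of_def)
  moreover have "noncrossing (blue (bnc_of t) \<union> red (bnc_of t))"
    unfolding noncrossing_def bnc_of_def
    using tree_arcs_not_crossing[OF wt] in_span by (metis Un_iff bnc_simps(2,3))
  moreover have "is_diagonal ?N u" if "u \<in> red (bnc_of t)" for u
  proof -
    have "u \<in> sub_arcs Red 1 t"
      using that by (auto simp: bnc_of_def top_arcs_def glue_colour_def split: if_splits)
    then show ?thesis
      using sub_arcs_range[OF wt] tree_arcs_Red_length_ge_2[OF wt, of u False 1]
      by (cases u) (fastforce simp: is_diagonal_def arcs_def)
  qed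
  ultimately show ?thesis using N by (simp add: is_bnc_iff)
qed

lemma sub_arcs_list_replicate_Leaf:
  "sub_arcs_list col g j p (replicate k Leaf) =
     {(p + d, p + d + 1) | d. d < k \<and> glue_colour (edge_blue g (j + d)) True = Some col}"
proof (induction k arbitrary: j p)
  case (Suc k)
  have "{(p + d, p + d + 1) | d. d < Suc k \<and> glue_colour (edge_blue g (j + d)) True = Some col} =
      (if glue_colour (edge_blue g j) True = Some col then {(p, p + 1)} else {}) \<union>
      {(Suc p + d, Suc p + d + 1) | d.
        d < k \<and> glue_colour (edge_blue g (Suc j + d)) True = Some col}"
    by (auto simp: less_Suc_eq_0_disj)
  then show ?case using Suc by (simp add: top_arcs_def)
qed simp

lemma bnc_of_corolla:
  assumes x: "is_bubble x"
  shows "bnc_of (corolla bsize x) = x"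
proof (rule bnc_eqI)
  let ?n = "bsize x"
  have n: "2 \<le> ?n" "red x = {}" "blue x \<subseteq> sides ?n" using x by (auto simp: is_bubble_iff)
  show "bsize (bnc_of (corolla bsize x)) = bsize x" by simp
  fix col
  have "coloured col (bnc_of (corolla bsize x)) =
      (if glue_colour True (base_blue x) = Some col then {(1, 1 + ?n)} else {}) \<union>
      {(1 + d, 1 + d + 1) | d. d < ?n \<and> glue_colour (edge_blue x (1 + d)) True = Some col}"
    by (simp add: coloured_bnc_of top_arcs_def corolla_def sub_arcs_list_replicate_Leaf)
  also have "\<dots> = coloured col x"
  proof (cases col)
    case Blue
    have "{(1 + d, 1 + d + 1) | d. d < ?n \<and> edge_blue x (1 + d)} = blue x - {(1, ?n + 1)}"
    proof (intro set_eqI iffI)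
      fix u
      assume "u \<in> {(1 + d, 1 + d + 1) | d. d < ?n \<and> edge_blue x (1 + d)}"
      then show "u \<in> blue x - {(1, ?n + 1)}" using n(1) by (auto simp: edge_blue_def)
    next
      fix u
      assume u: "u \<in> blue x - {(1, ?n + 1)}"
      then obtain a b where ab: "u = (a, b)" "(a, b) \<in> sides ?n" using n(3) by (cases u) auto
      then have "1 \<le> a" "a \<le> ?n" "b = a + 1" using mem_sides[of ?n a b] n(1) u by auto
      then show "u \<in> {(1 + d, 1 + d + 1) | d. d < ?n \<and> edge_blue x (1 + d)}"
        using u ab by (auto simp: edge_blue_def intro!: exI[of _ "a - 1"])
    qed
    then show ?thesis using Blue by (auto simp: glue_colour_def base_blue_def)
  next
    case Red
    then show ?thesis using n by (simp add: glue_colour_def)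
  qed
  finally show "coloured col (bnc_of (corolla bsize x)) = coloured col x" .
qed

section \<open>Grafting trees composes configurations\<close>

fun leaf_blue :: "bool \<Rightarrow> bnc tree \<Rightarrow> nat \<Rightarrow> bool"
  and leaf_blue_list :: "bnc \<Rightarrow> nat \<Rightarrow> bnc tree list \<Rightarrow> nat \<Rightarrow> bool" where
  "leaf_blue e Leaf i = e"
| "leaf_blue e (Node g ts) i = leaf_blue_list g 1 ts i"
| "leaf_blue_list g j [] i = False"
| "leaf_blue_list g j (t # ts) i =
     (if i \<le> nleaves t then leaf_blue (edge_blue g j) t i
      else leaf_blue_list g (Suc j) ts (i - nleaves t))"

lemma leaf_blue_iff:
  "wf_env t \<Longrightarrow> 1 \<le> i \<Longrightarrow> i \<le> nleaves t \<Longrightarrow>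
     (p + i - 1, p + i) \<in> tree_arcs Blue e p t \<longleftrightarrow> leaf_blue e t i"
  and leaf_blue_list_iff:
  "wf_env_list ts \<Longrightarrow> 1 \<le> i \<Longrightarrow> i \<le> nleaves_list ts \<Longrightarrow>
     (p + i - 1, p + i) \<in> sub_arcs_list Blue g j p ts \<longleftrightarrow> leaf_blue_list g j ts i"
proof (induction e t i and g j ts i arbitrary: p and p rule: leaf_blue_leaf_blue_list.induct)
  case (1 e i p)
  then show ?case by (simp add: top_arcs_def glue_colour_def)
next
  case (2 e g ts i p)
  have "(p + i - 1, p + i) \<notin> top_arcs Blue e p (Node g ts)"
    using nleaves_Node_ge_2[OF "2.prems"(1)] by (auto simp: top_arcs_def)
  then show ?case using 2 by simp
next
  case (4 g j t ts i p)
  have wt: "wf_env t" and wts: "wf_env_list ts" using "4.prems"(1) by auto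
  show ?case
  proof (cases "i \<le> nleaves t")
    case True
    have "(p + i - 1, p + i) \<notin> sub_arcs_list Blue g (Suc j) (p + nleaves t) ts"
      using sub_arcs_list_range[OF wts, of "(p + i - 1, p + i)" Blue g "Suc j" "p + nleaves t"]
        True "4.prems"(2) by auto
    then show ?thesis using "4.IH"(1)[OF True wt "4.prems"(2) True] True by auto
  next
    case False
    have "(p + i - 1, p + i) \<notin> tree_arcs Blue (edge_blue g j) p t"
      using tree_arcs_range[OF wt, of "(p + i - 1, p + i)" Blue "edge_blue g j" p] False by auto
    moreover have "p + nleaves t + (i - nleaves t) = p + i" using False by simp
    ultimately show ?thesis
      using "4.IH"(2)[OF False wts, of "p + nleaves t"] False "4.prems"(3) by auto
  qed
qed simp

lemma top_arcs_Node_graft_list: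
  assumes "2 \<le> nleaves_list ts" "1 \<le> i" "i \<le> nleaves_list ts" "1 \<le> nleaves s"
  shows "top_arcs col e p (Node g (graft_list ts i s)) =
    map_arcs (stretch (p + i - 1) (nleaves s))
      (top_arcs col e p (Node g ts) - {(p + i - 1, p + i)})"
proof -
  let ?q = "p + i - 1" and ?m = "nleaves s"
  have "stretch ?q ?m p = p" "stretch ?q ?m (p + nleaves_list ts) = p + (nleaves_list ts + ?m - 1)"
    using assms by (auto simp: stretch_def)
  moreover have "{(p, p + nleaves_list ts)} - {(?q, p + i)} = {(p, p + nleaves_list ts)}"
    using assms(1) by auto
  ultimately show ?thesis
    using nleaves_list_graft_list[of i ts s] assms(2,3) by (simp add: top_arcs_def)
qed

lemma tree_arcs_stretch_left:
  assumes "wf_env t" "p + nleaves t \<le> q" "X \<subseteq> tree_arcs col e p t"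
  shows "map_arcs (stretch q m) (X - {(q, r)}) = X"
proof -
  have left: "x < q \<and> y \<le> q" if "(x, y) \<in> X" for x y
    using tree_arcs_range[OF assms(1)] assms(2,3) that by fastforce
  then have "X - {(q, r)} = X" by blast
  moreover have "map_arcs (stretch q m) X = X"
    by (rule map_arcs_stretch_left) (use left in fastforce)
  ultimately show ?thesis by simp
qed

lemma sub_arcs_list_stretch_right:
  assumes "wf_env_list ts" "q < p" "1 \<le> m"
  shows "sub_arcs_list col g j (p + (m - 1)) ts =
    map_arcs (stretch q m) (sub_arcs_list col g j p ts - {(q, r)})"
proof -
  have right: "q < x \<and> q < y" if "(x, y) \<in> sub_arcs_list col g j p ts" for x y
    using sub_arcs_list_range[OF assms(1) that] assms(2) by auto
  then have "sub_arcs_list col g j p ts - {(q, r)} = sub_arcs_list col g j p ts" by blast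
  moreover have "map_arcs (stretch q m) (sub_arcs_list col g j p ts) =
      map_arcs (\<lambda>v. v + (m - 1)) (sub_arcs_list col g j p ts)"
    by (rule map_arcs_stretch_right) (use assms(3) right in auto)
  ultimately show ?thesis by (simp add: sub_arcs_list_shift)
qed

lemma tree_arcs_graft:
  "wf_env t \<Longrightarrow> wf_env s \<Longrightarrow> 1 \<le> i \<Longrightarrow> i \<le> nleaves t \<Longrightarrow>
     tree_arcs col e p (graft t i s) =
       map_arcs (stretch (p + i - 1) (nleaves s)) (tree_arcs col e p t - {(p + i - 1, p + i)}) \<union>
       tree_arcs col (leaf_blue e t i) (p + i - 1) s"
  and sub_arcs_list_graft_list:
  "wf_env_list ts \<Longrightarrow> wf_env s \<Longrightarrow> 1 \<le> i \<Longrightarrow> i \<le> nleaves_list ts \<Longrightarrow>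
     sub_arcs_list col g j p (graft_list ts i s) =
       map_arcs (stretch (p + i - 1) (nleaves s))
         (sub_arcs_list col g j p ts - {(p + i - 1, p + i)}) \<union>
       tree_arcs col (leaf_blue_list g j ts i) (p + i - 1) s"
proof (induction t i s and ts i s arbitrary: e p and g j p rule: graft_graft_list.induct)
  case (1 i s e p)
  then show ?case by (auto simp: top_arcs_def)
next
  case (2 g ts i s e p)
  then show ?case
    using "2.IH"[of g 1 p] top_arcs_Node_graft_list[of ts i s col e p g]
      nleaves_Node_ge_2[OF "2.prems"(1)] nleaves_ge_1[OF "2.prems"(2)]
    by (simp add: Un_Diff Un_ac)
next
  case (3 i s g j p)
  then show ?case by simp
next
  case (4 t ts i s g j p)
  let ?n = "nleaves t"
  have wt: "wf_env t" and wts: "wf_env_list ts" using "4.prems"(1) by auto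
  have m: "1 \<le> nleaves s" using nleaves_ge_1[OF "4.prems"(2)] .
  show ?case
  proof (cases "i \<le> ?n")
    case True
    have "p + nleaves (graft t i s) = p + ?n + (nleaves s - 1)"
      using nleaves_graft[OF "4.prems"(3) True] m by simp
    moreover have "p + i - 1 < p + ?n" using True "4.prems"(3) by simp
    ultimately show ?thesis
      using "4.IH"(1)[OF True wt "4.prems"(2,3) True] True
        sub_arcs_list_stretch_right[OF wts _ m, of "p + i - 1" "p + ?n" col g "Suc j" "p + i"]
      by (simp add: Un_Diff Un_ac add.assoc)
  next
    case False
    have idx: "1 \<le> i - ?n" "i - ?n \<le> nleaves_list ts" using False "4.prems"(4) by auto
    have "p + ?n + (i - ?n) - 1 = p + i - 1" "p + ?n + (i - ?n) = p + i" using False by auto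
    moreover have "p + ?n \<le> p + i - 1" using False by simp
    ultimately show ?thesis
      using "4.IH"(2)[OF False wts "4.prems"(2) idx, of g "Suc j" "p + ?n"] False
        tree_arcs_stretch_left[OF wt _ Un_upper1] tree_arcs_stretch_left[OF wt _ Un_upper2]
      by (simp add: Un_Diff Un_ac)
  qed
qed

lemma bnc_of_graft:
  assumes wt: "wf_env t" and ws: "wf_env s" and i: "1 \<le> i" "i \<le> nleaves t"
  shows "bnc_of (graft t i s) = cncb_comp (bnc_of t) i (bnc_of s)"
proof (rule bnc_eqI)
  show "bsize (bnc_of (graft t i s)) = bsize (cncb_comp (bnc_of t) i (bnc_of s))"
    using nleaves_graft[OF i] by simp
  fix col
  let ?m = "nleaves s" and ?e = "(i, i + nleaves s)" and ?L = "leaf_blue True t i"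
  have m: "1 \<le> ?m" using nleaves_ge_1[OF ws] .
  have not_red: "(i, i + 1) \<notin> red (bnc_of t)" "(1, bsize (bnc_of s) + 1) \<notin> red (bnc_of s)"
    using red_is_diagonal[OF bnc_of_is_bnc[OF wt], of "(i, i + 1)"]
      red_is_diagonal[OF bnc_of_is_bnc[OF ws], of "(1, ?m + 1)"]
    by (auto simp: is_diagonal_def)
  have edge: "(i, i + 1) \<in> blue (bnc_of t) \<longleftrightarrow> ?L"
    using leaf_blue_iff[OF wt i, of 1 True] by (simp add: bnc_of_def)
  have base: "(1, ?m + 1) \<in> blue (bnc_of s) \<longleftrightarrow> root_blue s"
    using span_in_tree_arcs[OF ws, of 1 Blue True]
    by (simp add: bnc_of_def glue_colour_def add.commute)
  have upper: "map_arcs (stretch i ?m) (tree_arcs col True 1 t) - {?e} =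
      map_arcs (stretch i ?m) (tree_arcs col True 1 t - {(i, i + 1)})"
    using map_arcs_Diff_inj[OF strict_mono_imp_inj_on[OF strict_mono_stretch[OF m]]]
    by (simp add: stretch_def)
  have lower: "map_arcs (\<lambda>v. v + i - 1) (tree_arcs col True 1 s) - {?e} = sub_arcs col i s"
  proof -
    have "(\<lambda>v. v + i - 1) = (\<lambda>v. v + (i - 1))" using i by auto
    then have "map_arcs (\<lambda>v. v + i - 1) (tree_arcs col True 1 s) = tree_arcs col True i s"
      using top_arcs_shift[of col True 1 "i - 1" s] sub_arcs_shift[of col 1 "i - 1" s] i by simp
    then show ?thesis
      using top_arcs_subset[of col True i s] span_notin_sub_arcs[OF ws, of i col] by auto
  qed
  have "coloured col (bnc_of (graft t i s)) =
      map_arcs (stretch i ?m) (tree_arcs col True 1 t - {(i, i + 1)}) \<union> sub_arcs col i s \<union>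
      (if glue_colour ?L (root_blue s) = Some col then {?e} else {})"
    using tree_arcs_graft[OF wt ws i, of col True 1] by (auto simp: coloured_bnc_of top_arcs_def)
  also have "\<dots> = coloured col (cncb_comp (bnc_of t) i (bnc_of s))"
    unfolding coloured_cncb_comp[OF not_red] bsize_bnc_of edge base coloured_bnc_of Un_Diff
      upper lower ..
  finally show "coloured col (bnc_of (graft t i s)) =
      coloured col (cncb_comp (bnc_of t) i (bnc_of s))" .
qed

lemma env_eq_wf: "env_eq t s \<Longrightarrow> wf_env t \<and> wf_env s \<and> nleaves t = nleaves s"
proof (induction rule: env_eq.induct)
  case (gen x i y)
  then have "is_bubble x" "is_bubble y" "1 \<le> i" "i \<le> bsize x"
    by (auto simp: bulle_defined_def)
  then show ?case
    using wf_env_graft wf_env_corolla is_bubble_cncb_comp[OF gen]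
      nleaves_graft[of i "corolla bsize x"]
    by simp
next
  case (comp t t' s s' i)
  then show ?case using wf_env_graft nleaves_graft[of i t s] nleaves_graft[of i t' s'] by simp
qed auto

lemma bnc_of_env_eq: "env_eq t s \<Longrightarrow> bnc_of t = bnc_of s"
proof (induction rule: env_eq.induct)
  case (gen x i y)
  then have "is_bubble x" "is_bubble y" "1 \<le> i" "i \<le> bsize x"
    by (auto simp: bulle_defined_def)
  then show ?case
    using bnc_of_graft[of "corolla bsize x" "corolla bsize y" i] wf_env_corolla
    by (simp add: bnc_of_corolla is_bubble_cncb_comp[OF gen])
next
  case (comp t t' s s' i)
  then show ?case using env_eq_wf bnc_of_graft[of t s i] bnc_of_graft[of t' s' i] by metis
qed auto

section \<open>Surjectivity\<close>

definition outside_arcs :: "nat \<Rightarrow> nat \<Rightarrow> arc set" where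
  "outside_arcs a b = {(x, y). y \<le> a \<or> b \<le> x \<or> x \<le> a \<and> b \<le> y}"

definition inside_arcs :: "nat \<Rightarrow> nat \<Rightarrow> arc set" where
  "inside_arcs a b = {(x, y). a \<le> x \<and> y \<le> b}"

definition contract :: "nat \<Rightarrow> nat \<Rightarrow> nat \<Rightarrow> nat" where
  "contract a b v = (if v \<le> a then v else v + a + 1 - b)"

text \<open>Cutting a configuration along the diagonal (a, b): in the outer part the polygon between
  a and b shrinks to the edge (a, a + 1), the inner part is that polygon with base (a, b). A blue
  diagonal becomes a blue edge and a blue base, a red one an uncoloured edge and an uncoloured
  base, so that gluing the two parts back recreates it.\<close>

definition outer_part :: "bnc \<Rightarrow> nat \<Rightarrow> nat \<Rightarrow> bnc" where
  "outer_part c a b =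
     (bsize c + a + 1 - b,
      map_arcs (contract a b) (blue c \<inter> outside_arcs a b - {(a, b)}) \<union>
        (if (a, b) \<in> blue c then {(a, a + 1)} else {}),
      map_arcs (contract a b) (red c \<inter> outside_arcs a b - {(a, b)}))"

definition inner_part :: "bnc \<Rightarrow> nat \<Rightarrow> nat \<Rightarrow> bnc" where
  "inner_part c a b =
     (b - a,
      map_arcs (\<lambda>v. v + 1 - a) (blue c \<inter> inside_arcs a b - {(a, b)}) \<union>
        (if (a, b) \<in> blue c then {(1, b - a + 1)} else {}),
      map_arcs (\<lambda>v. v + 1 - a) (red c \<inter> inside_arcs a b - {(a, b)}))"

lemma coloured_outer_part:
  "coloured col (outer_part c a b) =
     map_arcs (contract a b) (coloured col c \<inter> outside_arcs a b - {(a, b)}) \<union>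
     (if col = Blue \<and> (a, b) \<in> blue c then {(a, a + 1)} else {})"
  by (cases col) (simp_all add: outer_part_def)

lemma coloured_inner_part:
  "coloured col (inner_part c a b) =
     map_arcs (\<lambda>v. v + 1 - a) (coloured col c \<inter> inside_arcs a b - {(a, b)}) \<union>
     (if col = Blue \<and> (a, b) \<in> blue c then {(1, b - a + 1)} else {})"
  by (cases col) (simp_all add: inner_part_def)

lemma bsize_outer_part: "bsize (outer_part c a b) = bsize c + a + 1 - b"
  by (simp add: outer_part_def)

lemma bsize_inner_part: "bsize (inner_part c a b) = b - a"
  by (simp add: inner_part_def)

locale coloured_diagonal =
  fixes c :: bnc and a b :: nat
  assumes bnc: "is_bnc c"
    and coloured: "(a, b) \<in> blue c \<union> red c"
    and diagonal: "is_diagonal (bsize c) (a, b)"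
begin

abbreviation "n \<equiv> bsize c"

lemma bounds: "1 \<le> a" "a + 2 \<le> b" "b \<le> n + 1" "b - a < n"
  using diagonal by (auto simp: is_diagonal_def arcs_def)

lemma arc_bounds: "(x, y) \<in> blue c \<union> red c \<Longrightarrow> 1 \<le> x \<and> x < y \<and> y \<le> n + 1"
  using bnc_arcs_subset[OF bnc] by (auto simp: arcs_def)

lemma outside_or_inside:
  assumes "(x, y) \<in> blue c \<union> red c"
  shows "(x, y) \<in> outside_arcs a b \<or> (x, y) \<in> inside_arcs a b"
proof -
  have "\<not> crossing (x, y) (a, b) \<and> \<not> crossing (a, b) (x, y)"
    using bnc_disjoint_noncrossing[OF bnc] assms coloured by (auto simp: noncrossing_def)
  then show ?thesis
    using arc_bounds[OF assms] by (auto simp: crossing_def outside_arcs_def inside_arcs_def)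
qed

lemma outside_vertices:
  "(x, y) \<in> blue c \<union> red c \<Longrightarrow> (x, y) \<in> outside_arcs a b \<Longrightarrow>
     x \<in> {v. v \<le> a \<or> b \<le> v} \<and> y \<in> {v. v \<le> a \<or> b \<le> v}"
  using arc_bounds[of x y] by (auto simp: outside_arcs_def)

lemma strict_mono_on_contract: "strict_mono_on {v. v \<le> a \<or> b \<le> v} (contract a b)"
  using bounds by (auto simp: strict_mono_on_def contract_def)

lemma contract_arc:
  "(x, y) \<in> blue c \<union> red c \<Longrightarrow> (x, y) \<in> outside_arcs a b \<Longrightarrow>
     (contract a b x, contract a b y) \<in> arcs (n + a + 1 - b)"
  using arc_bounds[of x y] bounds by (auto simp: outside_arcs_def contract_def arcs_def)

lemma contract_diagonal:
  assumes red: "(x, y) \<in> red c" and outside: "(x, y) \<in> outside_arcs a b" and ne: "(x, y) \<noteq> (a, b)"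
  shows "is_diagonal (n + a + 1 - b) (contract a b x, contract a b y)"
proof -
  have diagonal: "y \<noteq> x + 1" "(x, y) \<noteq> (1, n + 1)"
    using red_is_diagonal[OF bnc red] by (auto simp: is_diagonal_def)
  have xy: "x < y" "y \<le> n + 1" using arc_bounds red by auto
  from outside consider "y \<le> a" | "b \<le> x" | "x \<le> a" "b \<le> y"
    by (auto simp: outside_arcs_def)
  then have "contract a b y \<noteq> contract a b x + 1 \<and>
      (contract a b x, contract a b y) \<noteq> (1, n + a + 1 - b + 1)"
  proof cases
    case 1
    then show ?thesis using diagonal xy bounds by (auto simp: contract_def)
  next
    case 2
    then show ?thesis using diagonal xy bounds by (auto simp: contract_def)
  next
    case 3
    then show ?thesis using diagonal xy bounds ne by (auto simp: contract_def)
  qed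
  then show ?thesis
    using contract_arc[of x y] red outside by (simp add: is_diagonal_def)
qed

lemma inner_shift_arc:
  "(x, y) \<in> blue c \<union> red c \<Longrightarrow> (x, y) \<in> inside_arcs a b \<Longrightarrow> (x + 1 - a, y + 1 - a) \<in> arcs (b - a)"
  using arc_bounds[of x y] by (auto simp: inside_arcs_def arcs_def)

lemma inner_shift_diagonal:
  "(x, y) \<in> red c \<Longrightarrow> (x, y) \<in> inside_arcs a b \<Longrightarrow> (x, y) \<noteq> (a, b) \<Longrightarrow>
     is_diagonal (b - a) (x + 1 - a, y + 1 - a)"
  using red_is_diagonal[OF bnc, of "(x, y)"] inner_shift_arc[of x y] arc_bounds[of x y]
  by (auto simp: is_diagonal_def inside_arcs_def)

lemma outer_part_is_bnc: "is_bnc (outer_part c a b)"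
proof -
  let ?m = "n + a + 1 - b" and ?O = "outside_arcs a b"
  let ?B = "blue c \<inter> ?O - {(a, b)}" and ?R = "red c \<inter> ?O - {(a, b)}"
  have m: "2 \<le> ?m" "a \<le> ?m" using bounds by auto
  have "is_bnc (?m, map_arcs (contract a b) ?B, map_arcs (contract a b) ?R)"
  proof (rule is_bnc_map_arcs[OF bnc _ _ strict_mono_on_contract _ m(1)])
    show "\<And>x y. (x, y) \<in> ?B \<union> ?R \<Longrightarrow> x \<in> {v. v \<le> a \<or> b \<le> v} \<and> y \<in> {v. v \<le> a \<or> b \<le> v}"
      using outside_vertices by blast
    show "map_arcs (contract a b) (?B \<union> ?R) \<subseteq> arcs ?m"
      using contract_arc by (auto simp: map_arcs_def)
    show "\<And>u. u \<in> map_arcs (contract a b) ?R \<Longrightarrow> is_diagonal ?m u"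
      using contract_diagonal by (auto simp: map_arcs_def)
  qed auto
  moreover have "(a, a + 1) \<in> sides ?m" using bounds m by (simp add: mem_sides)
  ultimately show ?thesis
    using is_bnc_insert_side[OF _ m(1)] by (cases "(a, b) \<in> blue c") (simp_all add: outer_part_def)
qed

lemma inner_part_is_bnc: "is_bnc (inner_part c a b)"
proof -
  let ?d = "b - a" and ?I = "inside_arcs a b"
  let ?B = "blue c \<inter> ?I - {(a, b)}" and ?R = "red c \<inter> ?I - {(a, b)}"
  have d: "2 \<le> ?d" using bounds by simp
  have "is_bnc (?d, map_arcs (\<lambda>v. v + 1 - a) ?B, map_arcs (\<lambda>v. v + 1 - a) ?R)"
  proof (rule is_bnc_map_arcs[OF bnc _ _ _ _ d])
    show "strict_mono_on {a..} (\<lambda>v. v + 1 - a)"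
      by (auto simp: strict_mono_on_def)
    show "\<And>x y. (x, y) \<in> ?B \<union> ?R \<Longrightarrow> x \<in> {a..} \<and> y \<in> {a..}"
      using arc_bounds by (fastforce simp: inside_arcs_def)
    show "map_arcs (\<lambda>v. v + 1 - a) (?B \<union> ?R) \<subseteq> arcs ?d"
      using inner_shift_arc by (auto simp: map_arcs_def)
    show "\<And>u. u \<in> map_arcs (\<lambda>v. v + 1 - a) ?R \<Longrightarrow> is_diagonal ?d u"
      using inner_shift_diagonal by (auto simp: map_arcs_def)
  qed auto
  moreover have "(1, ?d + 1) \<in> sides ?d" using d by (simp add: mem_sides)
  ultimately show ?thesis
    using is_bnc_insert_side[OF _ d] by (cases "(a, b) \<in> blue c") (simp_all add: inner_part_def)
qed

lemma outer_part_edge: "(a, a + 1) \<in> blue (outer_part c a b) \<longleftrightarrow> (a, b) \<in> blue c"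
proof -
  have "(a, a + 1) \<noteq> (contract a b x, contract a b y)"
    if "(x, y) \<in> blue c \<inter> outside_arcs a b - {(a, b)}" for x y
    using that arc_bounds[of x y] bounds by (auto simp: outside_arcs_def contract_def)
  then show ?thesis by (auto simp: outer_part_def map_arcs_def)
qed

lemma inner_part_base: "(1, b - a + 1) \<in> blue (inner_part c a b) \<longleftrightarrow> (a, b) \<in> blue c"
proof -
  have "(1, b - a + 1) \<noteq> (x + 1 - a, y + 1 - a)"
    if "(x, y) \<in> blue c \<inter> inside_arcs a b - {(a, b)}" for x y
    using that bounds by (auto simp: inside_arcs_def)
  then show ?thesis by (auto simp: inner_part_def map_arcs_def)
qed

lemma map_arcs_stretch_outer_part:
  "map_arcs (stretch a (b - a)) (coloured col (outer_part c a b)) =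
     (coloured col c \<inter> outside_arcs a b - {(a, b)}) \<union>
     (if col = Blue \<and> (a, b) \<in> blue c then {(a, b)} else {})"
proof -
  have inverse: "stretch a (b - a) (contract a b v) = v" if "v \<le> a \<or> b \<le> v" for v
    using that bounds by (auto simp: stretch_def contract_def)
  have "map_arcs (stretch a (b - a) \<circ> contract a b) (coloured col c \<inter> outside_arcs a b - {(a, b)}) =
      coloured col c \<inter> outside_arcs a b - {(a, b)}"
  proof (rule map_arcs_cong_id)
    fix x y
    assume "(x, y) \<in> coloured col c \<inter> outside_arcs a b - {(a, b)}"
    then have "x \<in> {v. v \<le> a \<or> b \<le> v} \<and> y \<in> {v. v \<le> a \<or> b \<le> v}"
      using outside_vertices coloured_subset[of col c] by blast
    then show "(stretch a (b - a) \<circ> contract a b) x = x \<and> (stretch a (b - a) \<circ> contract a b) y = y"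
      using inverse by simp
  qed
  moreover have "stretch a (b - a) a = a" "stretch a (b - a) (a + 1) = b"
    using bounds by (auto simp: stretch_def)
  ultimately show ?thesis by (simp add: coloured_outer_part map_arcs_map_arcs)
qed

lemma map_arcs_shift_inner_part:
  "map_arcs (\<lambda>v. v + a - 1) (coloured col (inner_part c a b)) =
     (coloured col c \<inter> inside_arcs a b - {(a, b)}) \<union>
     (if col = Blue \<and> (a, b) \<in> blue c then {(a, b)} else {})"
proof -
  have "map_arcs ((\<lambda>v. v + a - 1) \<circ> (\<lambda>v. v + 1 - a)) (coloured col c \<inter> inside_arcs a b - {(a, b)}) =
      coloured col c \<inter> inside_arcs a b - {(a, b)}"
    using arc_bounds coloured_subset[of col c]
    by (intro map_arcs_cong_id) (fastforce simp: inside_arcs_def)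
  then show ?thesis using bounds by (simp add: coloured_inner_part map_arcs_map_arcs)
qed

lemma cncb_comp_outer_inner: "cncb_comp (outer_part c a b) a (inner_part c a b) = c"
proof (rule bnc_eqI)
  show "bsize (cncb_comp (outer_part c a b) a (inner_part c a b)) = bsize c"
    using bounds by (simp add: bsize_outer_part bsize_inner_part)
  fix col
  have not_red: "(a, a + 1) \<notin> red (outer_part c a b)"
      "(1, bsize (inner_part c a b) + 1) \<notin> red (inner_part c a b)"
    using red_is_diagonal[OF outer_part_is_bnc, of "(a, a + 1)"]
      red_is_diagonal[OF inner_part_is_bnc, of "(1, bsize (inner_part c a b) + 1)"]
    by (auto simp: is_diagonal_def)
  have glued: "glue_colour ((a, a + 1) \<in> blue (outer_part c a b))
      ((1, b - a + 1) \<in> blue (inner_part c a b)) = Some col \<longleftrightarrow> (a, b) \<in> coloured col c"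
    using outer_part_edge inner_part_base coloured bnc_disjoint_noncrossing[OF bnc]
    by (cases col) (auto simp: glue_colour_def)
  have b: "a + (b - a) = b" using bounds by simp
  let ?X = "coloured col c" and ?e = "(a, b)"
  let ?extra = "if col = Blue \<and> ?e \<in> blue c then {?e} else {}"
  have "coloured col (cncb_comp (outer_part c a b) a (inner_part c a b)) =
      ((?X \<inter> outside_arcs a b - {?e}) \<union> ?extra \<union> ((?X \<inter> inside_arcs a b - {?e}) \<union> ?extra) -
        {?e}) \<union> (if ?e \<in> ?X then {?e} else {})"
    unfolding coloured_cncb_comp[OF not_red] bsize_inner_part glued map_arcs_stretch_outer_part
      map_arcs_shift_inner_part b ..
  also have "\<dots> = ?X"
  proof -
    have "?X \<subseteq> outside_arcs a b \<union> inside_arcs a b"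
      using outside_or_inside coloured_subset[of col c] by fast
    then show ?thesis by auto
  qed
  finally show "coloured col (cncb_comp (outer_part c a b) a (inner_part c a b)) = ?X" .
qed

end

lemma bnc_of_surj: "is_bnc c \<Longrightarrow> \<exists>t. wf_env t \<and> bnc_of t = c"
proof (induction "bsize c" arbitrary: c rule: less_induct)
  case less
  have "c = bnc_unit \<or> 2 \<le> bsize c" using less.prems by (auto simp: is_bnc_iff)
  then consider "c = bnc_unit" | "is_bubble c"
    | u where "u \<in> blue c \<union> red c" "is_diagonal (bsize c) u"
    using less.prems unfolding is_bubble_def by blast
  then show ?case
  proof cases
    case 1
    then show ?thesis using bnc_of_Leaf wf_tree.simps(1) by blast
  next
    case 2
    then show ?thesis using bnc_of_corolla wf_env_corolla by blast
  next
    case (3 u)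
    obtain a b where "u = (a, b)" by fastforce
    with 3 interpret coloured_diagonal c a b using less.prems by unfold_locales auto
    have "bsize (outer_part c a b) < n" "bsize (inner_part c a b) < n"
      using bounds by (simp_all add: bsize_outer_part bsize_inner_part)
    then obtain t s where t: "wf_env t" "bnc_of t = outer_part c a b"
      and s: "wf_env s" "bnc_of s = inner_part c a b"
      using less.hyps outer_part_is_bnc inner_part_is_bnc by meson
    have "1 \<le> a" "a \<le> nleaves t"
      using bounds bsize_bnc_of[of t] by (auto simp: t(2) bsize_outer_part)
    then show ?thesis
      using bnc_of_graft[OF t(1) s(1)] wf_env_graft[OF t(1) s(1)] cncb_comp_outer_inner t(2) s(2)
      by metis
  qed
qed

section \<open>Reduced trees\<close>

lemma env_eq_graft_same:
  "env_eq t t' \<Longrightarrow> wf_env s \<Longrightarrow> 1 \<le> i \<Longrightarrow> i \<le> nleaves t \<Longrightarrow> env_eq (graft t i s) (graft t' i s)"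
  by (rule env_eq.comp[OF _ env_eq.refl])

lemma env_eq_child:
  assumes "wf_env (Node g (A @ u # C))" and "env_eq u u'"
  shows "env_eq (Node g (A @ u # C)) (Node g (A @ u' # C))"
proof -
  have "wf_env (Node g (A @ Leaf # C))" using assms(1) by (simp add: wf_env_list_iff)
  then have "env_eq (graft (Node g (A @ Leaf # C)) (nleaves_list A + 1) u)
      (graft (Node g (A @ Leaf # C)) (nleaves_list A + 1) u')"
    by (intro env_eq.comp[OF env_eq.refl assms(2)]) simp_all
  then show ?thesis by (simp add: graft_list_append_Leaf)
qed

lemma env_eq_children:
  assumes wf: "wf_env (Node g ts)" "wf_env (Node g ts')" and length: "length ts = length ts'"
    and eq: "\<And>k. k < length ts \<Longrightarrow> env_eq (ts ! k) (ts' ! k)"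
  shows "env_eq (Node g ts) (Node g ts')"
proof -
  have prefix: "env_eq (Node g ts) (Node g (take m ts' @ drop m ts))" if "m \<le> length ts" for m
    using that
  proof (induction m)
    case 0
    then show ?case using env_eq.refl[OF wf(1)] by simp
  next
    case (Suc m)
    then have m: "m < length ts" by simp
    have "set (take m ts' @ ts ! m # drop (Suc m) ts) \<subseteq> set ts' \<union> set ts"
      using m by (auto dest: in_set_takeD in_set_dropD)
    then have "wf_env (Node g (take m ts' @ ts ! m # drop (Suc m) ts))"
      using wf m length by (auto simp: wf_env_list_iff)
    from env_eq_child[OF this eq[OF m]] show ?case
      using Suc m length
      by (auto simp: Cons_nth_drop_Suc take_Suc_conv_app_nth intro: env_eq.trans)
  qed
  from prefix[of "length ts"] show ?thesis using length by simp
qed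

lemma env_eq_merge_leaves:
  assumes "bulle_defined g (length A + 1) h"
    and "length (A @ Node h us # C) = bsize g" and "length us = bsize h"
    and leaves: "\<forall>x\<in>set (A @ us @ C). x = Leaf"
  shows "env_eq (Node g (A @ Node h us # C)) (Node (cncb_comp g (length A + 1) h) (A @ us @ C))"
proof -
  let ?gh = "cncb_comp g (length A + 1) h"
  have "\<forall>y\<in>set (A @ Leaf # C). y = Leaf" "\<forall>y\<in>set us. y = Leaf" using leaves by auto
  moreover have "length (A @ Leaf # C) = bsize g" "length (A @ us @ C) = bsize ?gh"
    using assms(2,3) by simp_all
  ultimately have "A @ Leaf # C = replicate (bsize g) Leaf" "us = replicate (bsize h) Leaf"
    "A @ us @ C = replicate (bsize ?gh) Leaf"
    using leaves assms(3) replicate_length_same by metis+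
  moreover have "nleaves_list A = length A"
    using leaves replicate_length_same[of A Leaf] nleaves_list_replicate_Leaf
    by (metis Un_iff set_append)
  ultimately show ?thesis
    using env_eq.gen[OF assms(1)] graft_list_append_Leaf[of A C "Node h us"]
    by (simp add: corolla_def)
qed

text \<open>By induction on the size of the trees below: one that is not a leaf is replaced by a leaf
  and grafted back afterwards; when all of them are leaves this is a defining relation.\<close>

lemma env_eq_merge_child:
  assumes "bulle_defined g (length A + 1) h"
    and "length (A @ Node h us # C) = bsize g" and "length us = bsize h"
    and "\<forall>x\<in>set (A @ us @ C). wf_env x"
  shows "env_eq (Node g (A @ Node h us # C)) (Node (cncb_comp g (length A + 1) h) (A @ us @ C))"
  using assms
proof (induction "size_list size (A @ us @ C)" arbitrary: A us C rule: less_induct)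
  case less
  let ?gh = "cncb_comp g (length A + 1) h"
  show ?case
  proof (cases "\<forall>x\<in>set (A @ us @ C). x = Leaf")
    case True
    then show ?thesis using env_eq_merge_leaves less.prems(1-3) by blast
  next
    case False
    then obtain x where x: "x \<in> set (A @ us @ C)" "x \<noteq> Leaf" by blast
    have wx: "wf_env x" using less.prems(4) x(1) by blast
    have size_x: "0 < size x" using x(2) by (cases x) auto
    consider (A) A1 A2 where "A = A1 @ x # A2" | (us) U1 U2 where "us = U1 @ x # U2"
      | (C) C1 C2 where "C = C1 @ x # C2"
      using x(1) by (auto dest: split_list)
    then show ?thesis
    proof cases
      case (A A1 A2)
      have "env_eq (Node g ((A1 @ Leaf # A2) @ Node h us # C))
          (Node ?gh ((A1 @ Leaf # A2) @ us @ C))"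
        using less.hyps[of "A1 @ Leaf # A2" us C] less.prems A size_x by auto
      from env_eq_graft_same[OF this wx, of "Suc (nleaves_list A1)"] show ?thesis
        using A by (simp add: graft_list_append_Leaf)
    next
      case (us U1 U2)
      have "env_eq (Node g (A @ Node h (U1 @ Leaf # U2) # C)) (Node ?gh (A @ (U1 @ Leaf # U2) @ C))"
        using less.hyps[of A "U1 @ Leaf # U2" C] less.prems us size_x by auto
      from env_eq_graft_same[OF this wx, of "Suc (nleaves_list A + nleaves_list U1)"] show ?thesis
        using us graft_list_append[of A "Suc (nleaves_list A + nleaves_list U1)"]
          graft_list_append_Leaf[of "A @ U1"]
        by (simp add: graft_list_append_Leaf)
    next
      case (C C1 C2)
      have "env_eq (Node g (A @ Node h us # C1 @ Leaf # C2)) (Node ?gh (A @ us @ C1 @ Leaf # C2))"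
        using less.hyps[of A us "C1 @ Leaf # C2"] less.prems C size_x by auto
      from env_eq_graft_same[OF this wx, of "Suc (nleaves_list (A @ us @ C1))"] show ?thesis
        using C graft_list_append_Leaf[of "A @ Node h us # C1"]
          graft_list_append_Leaf[of "A @ us @ C1"]
        by simp
    qed
  qed
qed

text \<open>A child is composable with its parent when the output colour of its root bubble is the
  input colour of its slot, i.e. when Bulle composes the two bubbles (bulle_defined_iff).\<close>

fun composable :: "bool \<Rightarrow> bnc tree \<Rightarrow> bool" where
  "composable e Leaf = False"
| "composable e (Node h us) = (base_blue h \<longleftrightarrow> \<not> e)"

fun reduced :: "bnc tree \<Rightarrow> bool"
  and reduced_list :: "bnc \<Rightarrow> nat \<Rightarrow> bnc tree list \<Rightarrow> bool" where
  "reduced Leaf = True"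
| "reduced (Node g ts) = reduced_list g 1 ts"
| "reduced_list g j [] = True"
| "reduced_list g j (t # ts) =
     (reduced t \<and> \<not> composable (edge_blue g j) t \<and> reduced_list g (Suc j) ts)"

lemma reduced_list_iff_nth:
  "reduced_list g j ts \<longleftrightarrow>
     (\<forall>k<length ts. reduced (ts ! k) \<and> \<not> composable (edge_blue g (j + k)) (ts ! k))"
proof (induction ts arbitrary: j)
  case (Cons t ts)
  then show ?case by (auto simp: nth_Cons less_Suc_eq_0_disj split: nat.splits)
qed simp

lemma env_eq_merge_composable_child:
  assumes wf: "wf_env (Node g ts)" and k: "k < length ts"
    and composable: "composable (edge_blue g (Suc k)) (ts ! k)"
  shows "\<exists>t. wf_env t \<and> env_eq (Node g ts) t \<and> size t < size (Node g ts)"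
proof -
  obtain h us where h: "ts ! k = Node h us" using composable by (cases "ts ! k") auto
  let ?A = "take k ts" and ?C = "drop (Suc k) ts"
  have ts: "ts = ?A @ Node h us # ?C" using k h by (metis id_take_nth_drop)
  have "wf_env (Node h us)" using wf k h by (metis nth_mem wf_env_list_iff wf_tree.simps(2))
  then have h_wf: "is_bubble h" "length us = bsize h" "\<forall>u\<in>set us. wf_env u"
    by (auto simp: wf_env_list_iff)
  have defined: "bulle_defined g (length ?A + 1) h"
    using wf k composable h h_wf by (auto simp: bulle_defined_iff)
  have children: "\<forall>u\<in>set (?A @ us @ ?C). wf_env u"
    using wf h_wf(3) by (auto simp: wf_env_list_iff dest: in_set_takeD in_set_dropD)
  let ?t = "Node (cncb_comp g (length ?A + 1) h) (?A @ us @ ?C)"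
  have "length (?A @ Node h us # ?C) = bsize g" using wf ts by (metis wf_tree.simps(2))
  then have "env_eq (Node g ts) ?t" and "wf_env ?t"
    using env_eq_merge_child[OF defined _ h_wf(2) children] ts is_bubble_cncb_comp[OF defined]
      h_wf(2) children k
    by (auto simp: wf_env_list_iff)
  moreover have "size ?t < size (Node g ts)" by (subst (2) ts) simp
  ultimately show ?thesis by blast
qed

lemma env_eq_replace_children:
  assumes wf: "wf_env (Node g ts)"
    and children: "\<And>k. k < length ts \<Longrightarrow>
      \<exists>r. wf_env r \<and> P r \<and> env_eq (ts ! k) r \<and> size r \<le> size (ts ! k)"
  shows "\<exists>ts'. length ts' = length ts \<and> (\<forall>k<length ts. P (ts' ! k)) \<and> wf_env (Node g ts') \<and>
    env_eq (Node g ts) (Node g ts') \<and> size (Node g ts') \<le> size (Node g ts)"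
proof -
  obtain f where f: "\<And>k. k < length ts \<Longrightarrow>
      wf_env (f k) \<and> P (f k) \<and> env_eq (ts ! k) (f k) \<and> size (f k) \<le> size (ts ! k)"
    using children by metis
  define ts' where "ts' = map f [0..<length ts]"
  have ts': "length ts' = length ts" "\<And>k. k < length ts \<Longrightarrow> ts' ! k = f k"
    by (simp_all add: ts'_def)
  have wf': "wf_env (Node g ts')"
    using wf f ts' by (auto simp: wf_env_list_iff in_set_conv_nth)
  moreover have "env_eq (Node g ts) (Node g ts')"
    by (rule env_eq_children) (use wf wf' ts' f in auto)
  moreover have "size_list size ts = size_list (\<lambda>k. size (ts ! k)) [0..<length ts]"
    by (subst (1) map_nth[of ts, symmetric]) (simp only: size_list_map comp_def)
  then have "size_list size ts' \<le> size_list size ts"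
    using f size_list_pointwise[of "[0..<length ts]" "size \<circ> f" "\<lambda>k. size (ts ! k)"]
    by (simp add: ts'_def)
  ultimately show ?thesis using ts' f by auto
qed

lemma exists_reduced_env_eq:
  "wf_env t \<Longrightarrow> \<exists>r. wf_env r \<and> reduced r \<and> env_eq t r \<and> size r \<le> size t"
proof (induction "size t" arbitrary: t rule: less_induct)
  case less
  show ?case
  proof (cases t)
    case Leaf
    then show ?thesis using env_eq.refl[OF less.prems] by (intro exI[of _ Leaf]) simp
  next
    case (Node g ts)
    have "\<exists>r. wf_env r \<and> reduced r \<and> env_eq (ts ! k) r \<and> size r \<le> size (ts ! k)"
      if k: "k < length ts" for k
    proof -
      have "size (ts ! k) \<le> size_list size ts"
        by (rule size_list_estimation'[OF nth_mem[OF k]]) simp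
      then show ?thesis
        using less.hyps[of "ts ! k"] less.prems k Node by (simp add: wf_env_list_iff)
    qed
    then obtain ts' where ts': "length ts' = length ts" "\<forall>k<length ts. reduced (ts' ! k)"
      and wf': "wf_env (Node g ts')" and eq: "env_eq t (Node g ts')"
      and size': "size (Node g ts') \<le> size t"
      using env_eq_replace_children[of g ts reduced] less.prems Node by auto
    show ?thesis
    proof (cases "\<exists>k<length ts'. composable (edge_blue g (Suc k)) (ts' ! k)")
      case True
      then obtain t'' where t'': "wf_env t''" "env_eq (Node g ts') t''" "size t'' < size t"
        using env_eq_merge_composable_child[OF wf'] size' by fastforce
      then obtain r where "wf_env r" "reduced r" "env_eq t'' r" "size r \<le> size t''"
        using less.hyps by blast
      then show ?thesis using eq t'' by (meson env_eq.trans less_imp_le_nat order_trans)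
    next
      case False
      then have "reduced (Node g ts')" using ts' by (auto simp: reduced_list_iff_nth)
      then show ?thesis using wf' eq size' by blast
    qed
  qed
qed

lemma sub_arcs_list_Cons_split:
  assumes "wf_env t" "wf_env_list ts"
  shows "tree_arcs col (edge_blue g j) p t =
      {x \<in> sub_arcs_list col g j p (t # ts). snd x \<le> p + nleaves t}"
    and "sub_arcs_list col g (Suc j) (p + nleaves t) ts =
      {x \<in> sub_arcs_list col g j p (t # ts). p + nleaves t < snd x}"
  using tree_arcs_range[OF assms(1), of _ col "edge_blue g j" p]
    sub_arcs_list_range[OF assms(2), of _ col g "Suc j" "p + nleaves t"]
  by fastforce+

lemma sub_arcs_list_Cons_start:
  assumes t: "wf_env t" and ts: "wf_env_list ts" and fits: "\<not> composable (edge_blue g j) t"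
  shows "(p, y) \<in> sub_arcs_list col g j p (t # ts) \<Longrightarrow> y \<le> p + nleaves t"
    and "(\<exists>col. (p, p + nleaves t) \<in> sub_arcs_list col g j p (t # ts)) \<or>
      nleaves t = 1 \<and> (\<forall>col y. (p, y) \<notin> sub_arcs_list col g j p (t # ts))"
proof -
  have rest: "p < fst x" if "x \<in> sub_arcs_list col g (Suc j) (p + nleaves t) ts" for x col
    using sub_arcs_list_range[OF ts that] nleaves_ge_1[OF t] by simp
  then show "(p, y) \<in> sub_arcs_list col g j p (t # ts) \<Longrightarrow> y \<le> p + nleaves t"
    using tree_arcs_range[OF t, of "(p, y)" col "edge_blue g j" p] by fastforce
  show "(\<exists>col. (p, p + nleaves t) \<in> sub_arcs_list col g j p (t # ts)) \<or>
      nleaves t = 1 \<and> (\<forall>col y. (p, y) \<notin> sub_arcs_list col g j p (t # ts))"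
  proof (cases "t = Leaf \<and> \<not> edge_blue g j")
    case True
    then show ?thesis using rest by (fastforce simp: top_arcs_def glue_colour_def)
  next
    case False
    then have "glue_colour (edge_blue g j) (root_blue t) \<noteq> None"
      using fits by (cases t) (auto simp: glue_colour_def)
    then show ?thesis by (auto simp: top_arcs_def)
  qed
qed

lemma slot_colour_determined:
  assumes "\<not> composable e t" "\<not> composable e' t" "tree_arcs Blue e p t = tree_arcs Blue e' p t"
  shows "e = e'"
proof (cases t)
  case Leaf
  then show ?thesis using assms(3) by (auto simp: top_arcs_def glue_colour_def split: if_splits)
next
  case (Node h us)
  then show ?thesis using assms(1,2) by simp
qed

lemma sub_arcs_list_Cons_eqD:
  assumes t: "wf_env t" "wf_env_list ts" "\<not> composable (edge_blue g j) t"
    and t': "wf_env t'" "wf_env_list ts'" "\<not> composable (edge_blue g' j') t'"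
    and same: "\<And>col. sub_arcs_list col g j p (t # ts) = sub_arcs_list col g' j' p (t' # ts')"
  shows "nleaves t = nleaves t'"
    and "tree_arcs col (edge_blue g j) p t = tree_arcs col (edge_blue g' j') p t'"
    and "sub_arcs_list col g (Suc j) (p + nleaves t) ts =
      sub_arcs_list col g' (Suc j') (p + nleaves t) ts'"
proof -
  note start = sub_arcs_list_Cons_start[OF t, of p]
    and start' = sub_arcs_list_Cons_start[OF t', of p]
  show n: "nleaves t = nleaves t'"
  proof (cases "\<exists>col y. (p, y) \<in> sub_arcs_list col g j p (t # ts)")
    case True
    then obtain c c' where "(p, p + nleaves t) \<in> sub_arcs_list c g j p (t # ts)"
      "(p, p + nleaves t') \<in> sub_arcs_list c' g j p (t # ts)"
      using start(2) start'(2) unfolding same by blast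
    then have "p + nleaves t' \<le> p + nleaves t" "p + nleaves t \<le> p + nleaves t'"
      using start(1) start'(1) unfolding same by blast+
    then show ?thesis by simp
  next
    case False
    then have "nleaves t = 1" "nleaves t' = 1" using start(2) start'(2) unfolding same by blast+
    then show ?thesis by simp
  qed
  show "tree_arcs col (edge_blue g j) p t = tree_arcs col (edge_blue g' j') p t'"
    using sub_arcs_list_Cons_split(1)[OF t(1,2), of col g j p]
      sub_arcs_list_Cons_split(1)[OF t'(1,2), of col g' j' p]
    unfolding same n by (simp only:)
  show "sub_arcs_list col g (Suc j) (p + nleaves t) ts =
      sub_arcs_list col g' (Suc j') (p + nleaves t) ts'"
    using sub_arcs_list_Cons_split(2)[OF t(1,2), of col g j p]
      sub_arcs_list_Cons_split(2)[OF t'(1,2), of col g' j' p]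
    unfolding same n by (simp only:)
qed

lemma Node_tree_arcs_eqD:
  assumes t: "wf_env (Node h us)" and t': "wf_env (Node h' us')"
    and slots: "e = e' \<or> \<not> composable e (Node h us) \<and> \<not> composable e' (Node h' us')"
    and leaves: "nleaves_list us = nleaves_list us'"
    and arcs: "\<And>col. tree_arcs col e p (Node h us) = tree_arcs col e' p (Node h' us')"
  shows "base_blue h = base_blue h'"
    and "sub_arcs_list col h 1 p us = sub_arcs_list col h' 1 p us'"
proof -
  let ?s = "(p, p + nleaves_list us)"
  have "glue_colour e (base_blue h) = Some c \<longleftrightarrow> glue_colour e' (base_blue h') = Some c" for c
  proof -
    have "glue_colour e (base_blue h) = Some c \<longleftrightarrow> ?s \<in> tree_arcs c e p (Node h us)"
      using span_in_tree_arcs[OF t] by simp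
    also have "\<dots> \<longleftrightarrow> ?s \<in> tree_arcs c e' p (Node h' us')"
      using arcs by simp
    also have "\<dots> \<longleftrightarrow> glue_colour e' (base_blue h') = Some c"
      using span_in_tree_arcs[OF t'] leaves by simp
    finally show ?thesis .
  qed
  then have "glue_colour e (base_blue h) = glue_colour e' (base_blue h')"
    by (metis option.exhaust)
  then show "base_blue h = base_blue h'"
    using slots by (auto simp: glue_colour_def split: if_splits)
  have "sub_arcs col p (Node h us) = tree_arcs col e p (Node h us) - {?s}"
    using top_arcs_subset[of col e p "Node h us"] span_notin_sub_arcs[OF t, of p col] by auto
  moreover have "sub_arcs col p (Node h' us') = tree_arcs col e' p (Node h' us') - {?s}"
    using top_arcs_subset[of col e' p "Node h' us'"] span_notin_sub_arcs[OF t', of p col] leaves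
    by auto
  ultimately
  show "sub_arcs_list col h 1 p us = sub_arcs_list col h' 1 p us'"
    using arcs[of col] by simp
qed

text \<open>At the root nothing forces the slot colours e and e' to match the root bubbles, so there
  they are assumed equal instead.\<close>

lemma reduced_unique:
  "wf_env t \<Longrightarrow> wf_env t' \<Longrightarrow> reduced t \<Longrightarrow> reduced t' \<Longrightarrow>
     e = e' \<or> \<not> composable e t \<and> \<not> composable e' t' \<Longrightarrow> nleaves t = nleaves t' \<Longrightarrow>
     (\<And>col. tree_arcs col e p t = tree_arcs col e' p t') \<Longrightarrow> t = t'"
  and reduced_list_unique:
  "wf_env_list ts \<Longrightarrow> wf_env_list ts' \<Longrightarrow> reduced_list g j ts \<Longrightarrow> reduced_list g' j' ts' \<Longrightarrow>
     nleaves_list ts = nleaves_list ts' \<Longrightarrow>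
     (\<And>col. sub_arcs_list col g j p ts = sub_arcs_list col g' j' p ts') \<Longrightarrow>
     ts = ts' \<and> (\<forall>k<length ts. edge_blue g (j + k) = edge_blue g' (j' + k))"
proof (induction t and ts arbitrary: e e' p t' and g g' j j' p ts'
    rule: nleaves_nleaves_list.induct)
  case (1 e e' p t')
  then show ?case using nleaves_Node_ge_2 by (cases t') fastforce+
next
  case (2 h us e e' p t')
  obtain h' us' where t': "t' = Node h' us'"
    using "2.prems"(6) nleaves_Node_ge_2[OF "2.prems"(1)] by (cases t') auto
  have wf: "is_bubble h" "length us = bsize h" "wf_env_list us"
    "is_bubble h'" "length us' = bsize h'" "wf_env_list us'"
    using "2.prems"(1,2) t' by auto
  have "wf_env (Node h' us')"
    "e = e' \<or> \<not> composable e (Node h us) \<and> \<not> composable e' (Node h' us')"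
    "nleaves_list us = nleaves_list us'"
    "tree_arcs col e p (Node h us) = tree_arcs col e' p (Node h' us')" for col
    using "2.prems"(2,5,6) "2.prems"(7)[of col] t' by simp_all
  note eqD = Node_tree_arcs_eqD[OF "2.prems"(1) this]
  have base: "base_blue h = base_blue h'" by (rule eqD(1))
  have us: "us = us'" "\<forall>k<length us. edge_blue h (1 + k) = edge_blue h' (1 + k)"
    using "2.IH"[OF wf(3,6), of h 1 h' 1 p] eqD(2) "2.prems"(3,4,6) t' by auto
  have "h = h'"
  proof (rule bubble_eqI[OF wf(1,4) _ base])
    show "bsize h = bsize h'" using wf(2,5) us(1) by simp
    show "edge_blue h k = edge_blue h' k" if "1 \<le> k" "k \<le> bsize h" for k
      using us(2)[rule_format, of "k - 1"] that wf(2) by simp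
  qed
  then show ?case using t' us(1) by simp
next
  case (3 g g' j j' p ts')
  then show ?case using nleaves_list_ge_length[of ts'] by simp
next
  case (4 t ts g g' j j' p ts')
  have wt: "wf_env t" and wts: "wf_env_list ts" and fits: "\<not> composable (edge_blue g j) t"
    using "4.prems"(1,3) by auto
  obtain t' ts'' where ts': "ts' = t' # ts''"
    using "4.prems"(5) nleaves_ge_1[OF wt] by (cases ts') auto
  have wt': "wf_env t'" and wts': "wf_env_list ts''"
    and fits': "\<not> composable (edge_blue g' j') t'"
    using "4.prems"(2,4) ts' by auto
  have "sub_arcs_list col g j p (t # ts) = sub_arcs_list col g' j' p (t' # ts'')" for col
    using "4.prems"(6) ts' by simp
  note eqD = sub_arcs_list_Cons_eqD[OF wt wts fits wt' wts' fits' this]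
  have "t = t'"
    by (rule "4.IH"(1)[OF wt wt' _ _ _ eqD(1,2)]) (use "4.prems"(3,4) ts' fits fits' in auto)
  moreover have "edge_blue g j = edge_blue g' j'"
    using slot_colour_determined[OF fits] fits' eqD(2)[of Blue] unfolding \<open>t = t'\<close>[symmetric]
    by blast
  moreover have "ts = ts'' \<and> (\<forall>k<length ts. edge_blue g (Suc j + k) = edge_blue g' (Suc j' + k))"
    by (rule "4.IH"(2)[OF wts wts' _ _ _ eqD(3)]) (use "4.prems"(3-5) ts' eqD(1) in auto)
  ultimately show ?case using ts' by (auto simp: less_Suc_eq_0_disj)
qed

lemma bnc_of_reduced_inj:
  assumes "wf_env r" "wf_env r'" "reduced r" "reduced r'" "bnc_of r = bnc_of r'"
  shows "r = r'"
proof (rule reduced_unique[OF assms(1-4)])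
  show "nleaves r = nleaves r'" using bsize_bnc_of assms(5) by metis
  show "tree_arcs col True 1 r = tree_arcs col True 1 r'" for col
    using coloured_bnc_of assms(5) by metis
qed simp

theorem theorem2p8:
  shows "\<exists>f :: bnc tree \<Rightarrow> bnc.
     (\<forall>t. wf_env t \<longrightarrow> is_bnc (f t) \<and> bsize (f t) = nleaves t) \<and>
     (\<forall>t s. wf_env t \<longrightarrow> wf_env s \<longrightarrow> (f t = f s \<longleftrightarrow> env_eq t s)) \<and>
     (\<forall>c. is_bnc c \<longrightarrow> (\<exists>t. wf_env t \<and> f t = c)) \<and>
     f Leaf = bnc_unit \<and>
     (\<forall>t s i. wf_env t \<longrightarrow> wf_env s \<longrightarrow> 1 \<le> i \<longrightarrow> i \<le> nleaves t \<longrightarrow>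
        f (graft t i s) = cncb_comp (f t) i (f s))"
proof (intro exI[of _ bnc_of] conjI allI impI)
  fix t s
  assume t: "wf_env t" and s: "wf_env s"
  show "bnc_of t = bnc_of s \<longleftrightarrow> env_eq t s"
  proof
    assume "bnc_of t = bnc_of s"
    obtain r r' where r: "wf_env r" "reduced r" "env_eq t r"
      and r': "wf_env r'" "reduced r'" "env_eq s r'"
      using exists_reduced_env_eq[OF t] exists_reduced_env_eq[OF s] by blast
    have "r = r'"
      using bnc_of_reduced_inj[OF r(1) r'(1) r(2) r'(2)]
        bnc_of_env_eq[OF r(3)] bnc_of_env_eq[OF r'(3)]
        \<open>bnc_of t = bnc_of s\<close> by simp
    then show "env_eq t s" using r(3) r'(3) by (blast intro: env_eq.trans env_eq.sym)
  qed (rule bnc_of_env_eq)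
qed (simp_all add: bnc_of_is_bnc bnc_of_surj bnc_of_Leaf bnc_of_graft)

end
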